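(* Let $p$ be a prime, $q=p^n$ with $p,n$ fixed, $r$ a natural number, and $d$ a natural number with $(d,p)=1$ and $d\ge q^r$. Let $f$ be chosen uniformly at random from $\mathcal{G}_d$ and let $N(f)=(\#C_f(\mathbb{F}_{q^r})-1)/p$. For each $e\mid r$ let $X_{e,1},\dots,X_{e,\pi(e)}$ be Bernoulli random variables with parameter $1/p$ (value $1$ with probability $1/p$, $0$ otherwise), all $\{X_{e,i}\}_{e\mid r,1\le i\le\pi(e)}$ independent. Then: (i) If $(r,p)=1$, $N(f)$ has the same distribution as $\sum_{e\mid r}e\sum_{i=1}^{\pi(e)}X_{e,i}$; in particular the mean of $N(f)$ is $q^r/p$. (ii) If $p\mid r$, then $N(f)-q^{r/p}$ has the same distribution as $\sum_{e\mid r,\ (r/e,p)=1}e\sum_{i=1}^{\pi(e)}X_{e,i}$; in particular the mean of $N(f)$ is $\frac{q^r}{p}+\left(1-\frac1p\right)q^{r/p}$.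
   Context: $\mathcal{G}_d$ is the set of monic polynomials of degree $d$ in $\mathbb{F}_q[x]$. For $f\in\mathbb{F}_q[x]$ of degree prime to $p$, $C_f$ is the normalisation of the projective closure of the affine curve $y^p-y=f(x)$ over $\mathbb{F}_q$; its number of $\mathbb{F}_{q^r}$-rational points is congruent to $1$ modulo $p$. $\pi(e)$ denotes the number of monic irreducible polynomials of degree $e$ in $\mathbb{F}_q[x]$. *)

theory Defs
  imports "HOL-Probability.Probability" "HOL-Computational_Algebra.Polynomial"
begin

(* A homomorphism of rings with 1 (between fields it is automatically injective):
   used to view F_q (type 'a) inside F_{q^r} (type 'b). *)
definition is_ring_hom :: "('a::ring_1 \<Rightarrow> 'b::ring_1) \<Rightarrow> bool" where
  "is_ring_hom \<phi> \<longleftrightarrow> \<phi> 1 = 1 \<and> (\<forall>x y. \<phi> (x + y) = \<phi> x + \<phi> y) \<and> (\<forall>x y. \<phi> (x * y) = \<phi> x * \<phi> y)"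

definition monic_polys :: "nat \<Rightarrow> ('a::field) poly set" where
  "monic_polys d = {f. lead_coeff f = 1 \<and> degree f = d}"

definition num_monic_irred :: "('a::field) itself \<Rightarrow> nat \<Rightarrow> nat" where
  "num_monic_irred _ e = card {g :: 'a poly. lead_coeff g = 1 \<and> degree g = e \<and> irreducible g}"

(* Number of F_{q^r}-rational points of C_f, the smooth projective model of y^p - y = f(x):
   the affine curve is smooth, and since p does not divide deg f there is exactly one
   (rational) point at infinity. *)
definition AS_points :: "nat \<Rightarrow> ('a::field \<Rightarrow> 'b::{finite,field}) \<Rightarrow> 'a poly \<Rightarrow> nat" where
  "AS_points p \<phi> f = card {xy :: 'b \<times> 'b. snd xy ^ p - snd xy = poly (map_poly \<phi> f) (fst xy)} + 1"

definition N_AS :: "nat \<Rightarrow> ('a::field \<Rightarrow> 'b::{finite,field}) \<Rightarrow> 'a poly \<Rightarrow> nat" where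
  "N_AS p \<phi> f = (AS_points p \<phi> f - 1) div p"

definition bern_sum_pmf :: "nat \<Rightarrow> nat set \<Rightarrow> (nat \<Rightarrow> nat) \<Rightarrow> nat pmf" where
  "bern_sum_pmf p E \<pi> =
     map_pmf (\<lambda>X. \<Sum>e\<in>E. e * (\<Sum>i\<in>{1..\<pi> e}. of_bool (X (e, i))))
       (Pi_pmf (SIGMA e:E. {1..\<pi> e}) False (\<lambda>_. bernoulli_pmf (1 / real p)))"

end

(*
  Every fibre of the Artin-Schreier map y |-> y^p - y on F_(q^r) has p elements, so N(f) counts
  the x in F_(q^r) with f(x) in its image A. This image is the kernel of the absolute trace, hence
  stable under the q-power Frobenius, and f has coefficients in F_q; so whether f(x) lies in A
  depends only on the Frobenius orbit of x. The orbits are the root sets of the monic irreducible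
  g over F_q of degree e dividing r, so N(f) is the sum of deg g * [f(b_g) in A] over these g, for
  chosen roots b_g. Their product X^(q^r) - X has degree q^r <= d, so by the Chinese remainder
  theorem the vector (f(b_g))_g is uniformly distributed on the product of the fields F_(q^(deg g))
  when f is uniform among the monic polynomials of degree d. Finally A contains all of F_(q^e) when
  p divides r/e (the trace is then r/e times the trace of F_(q^e), i.e. 0) and has index p in
  F_(q^e) otherwise; the orbits of the first kind fill up F_(q^(r/p)).
*)

theory Submission
  imports Defs "HOL-Computational_Algebra.Computational_Algebra"
begin

section \<open>Counting fibres\<close>

lemma card_fibre_translate:
  fixes \<psi> :: "'c::ab_group_add \<Rightarrow> 'd"
  assumes eq: "\<And>x y. x \<in> G \<Longrightarrow> y \<in> G \<Longrightarrow> \<psi> x = \<psi> y \<longleftrightarrow> x - y \<in> Z"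
    and x0: "x0 \<in> G" and G: "G = (\<lambda>h. h + x0) ` H"
  shows "card {x\<in>G. \<psi> x = \<psi> x0} = card (Z \<inter> H)"
proof -
  have "{x\<in>G. \<psi> x = \<psi> x0} = (\<lambda>h. h + x0) ` (Z \<inter> H)"
    using eq[OF _ x0] G by (auto simp: image_iff)
  also have "card \<dots> = card (Z \<inter> H)"
    by (rule card_image) (auto intro: inj_onI)
  finally show ?thesis .
qed

lemma card_preimage_uniform_fibres:
  assumes "finite G" and "\<And>x. x \<in> G \<Longrightarrow> card {y\<in>G. \<psi> y = \<psi> x} = k"
  shows "card {x\<in>G. \<psi> x \<in> T} = card (T \<inter> \<psi> ` G) * k"
proof -
  have "{x\<in>G. \<psi> x \<in> T} = (\<Union>v\<in>T \<inter> \<psi> ` G. {x\<in>G. \<psi> x = v})"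
    by auto
  also have "card \<dots> = (\<Sum>v\<in>T \<inter> \<psi> ` G. card {x\<in>G. \<psi> x = v})"
    by (rule card_UN_disjoint) (use assms(1) in auto)
  also have "\<dots> = (\<Sum>v\<in>T \<inter> \<psi> ` G. k)"
    by (rule sum.cong) (use assms(2) in auto)
  finally show ?thesis
    by simp
qed

section \<open>Finite fields\<close>

lemma finite_field_pow_card:
  fixes x :: "'c :: {finite,field}"
  shows "x ^ CARD('c) = x"
proof (cases "x = 0")
  case False
  \<comment> \<open>Multiplication by \<open>x\<close> permutes the nonzero elements.\<close>
  have "x * (\<Prod>y\<in>UNIV-{0}. x * y) = x * x ^ (CARD('c) - 1) * \<Prod>(UNIV-{0})"
    by (simp add: prod.distrib mult_ac)
  also have "x * x ^ (CARD('c) - 1) = x ^ CARD('c)"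
    using finite_UNIV_card_ge_0[where ?'a = 'c] by (simp flip: power_Suc)
  also have "(\<Prod>y\<in>UNIV-{0}. x * y) = (\<Prod>y\<in>UNIV-{0}. y)"
    by (rule prod.reindex_bij_witness[of _ "\<lambda>y. y / x" "\<lambda>y. x * y"]) (use False in auto)
  finally show ?thesis
    by simp
qed (use finite_UNIV_card_ge_0[where ?'a = 'c] in auto)

lemma finite_field_pow_card_power:
  fixes x :: "'c :: {finite,field}"
  shows "x ^ (CARD('c) ^ k) = x"
  by (induction k) (simp_all add: finite_field_pow_card power_mult)

lemma inj_on_of_nat_CHAR: "inj_on (of_nat :: nat \<Rightarrow> 'c::ring_1) {..<CHAR('c)}"
proof -
  have "a = b" if "a < b" "b < CHAR('c)" "(of_nat a :: 'c) = of_nat b" for a b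
    using that of_nat_eq_iff_char_dvd[of a b] by (auto dest: dvd_imp_le)
  then show ?thesis
    by (intro inj_onI) (metis lessThan_iff linorder_neqE_nat)
qed

lemma card_range_of_int: "card (range (of_int :: int \<Rightarrow> 'c::{finite,ring_1})) = CHAR('c)"
proof -
  have "range (of_int :: int \<Rightarrow> 'c) = of_nat ` {..<CHAR('c)}"
  proof (intro equalityI subsetI)
    fix x :: 'c assume "x \<in> range of_int"
    then obtain a where a: "x = of_int a"
      by blast
    have "int CHAR('c) dvd a - a mod int CHAR('c)"
      by (rule dvd_minus_mod)
    then have "x = of_int (a mod int CHAR('c))"
      using a of_int_eq_0_iff_char_dvd[of "a - a mod int CHAR('c)", where 'a='c] by simp
    also have "\<dots> = of_nat (nat (a mod int CHAR('c)))"
      using finite_imp_CHAR_pos[where 'a='c] by simp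
    finally have "x = of_nat (nat (a mod int CHAR('c)))" .
    moreover have "nat (a mod int CHAR('c)) < CHAR('c)"
      using finite_imp_CHAR_pos[where 'a='c] by (simp add: nat_less_iff)
    ultimately show "x \<in> of_nat ` {..<CHAR('c)}"
      by blast
  qed (auto intro: range_eqI[of _ _ "int _"])
  then show ?thesis
    using inj_on_of_nat_CHAR[where 'c='c] by (simp add: card_image)
qed

lemma translate_range_of_int: "(\<lambda>h. of_int b + h) ` range (of_int :: int \<Rightarrow> 'c::ring_1) = range of_int"
proof (intro equalityI subsetI)
  fix z :: 'c assume "z \<in> range of_int"
  then obtain c where "z = of_int c"
    by blast
  then show "z \<in> (\<lambda>h. of_int b + h) ` range of_int"
    by (intro image_eqI[of _ _ "of_int (c - b)"]) auto
qed (auto simp flip: of_int_add)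

text \<open>The cosets of the additive subgroup of integers of \<open>'c\<close> partition \<open>'c\<close>.\<close>
lemma CHAR_dvd_card_UNIV: "CHAR('c::{finite,ring_1}) dvd CARD('c)"
proof -
  let ?H = "range (of_int :: int \<Rightarrow> 'c)"
  let ?\<psi> = "\<lambda>x. (\<lambda>h. x + h) ` ?H"
  have coset_eq: "?\<psi> x = ?\<psi> y \<longleftrightarrow> x - y \<in> ?H" for x y
  proof
    assume "?\<psi> x = ?\<psi> y"
    then have "x \<in> ?\<psi> y"
      by (metis add_0_right of_int_0 rangeI image_eqI)
    then show "x - y \<in> ?H"
      by auto
  next
    assume "x - y \<in> ?H"
    then obtain b where b: "x = y + of_int b"
      by (metis add.commute diff_add_cancel rangeE)
    then have "?\<psi> x = (\<lambda>h. y + h) ` ((\<lambda>h. of_int b + h) ` ?H)"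
      by (simp add: image_image add.assoc)
    then show "?\<psi> x = ?\<psi> y"
      by (simp only: translate_range_of_int)
  qed
  have "card {x \<in> UNIV. ?\<psi> x \<in> UNIV} = card (UNIV \<inter> range ?\<psi>) * card ?H"
    by (rule card_preimage_uniform_fibres)
      (use card_fibre_translate[of UNIV ?\<psi> ?H _ UNIV] coset_eq in \<open>auto simp: surj_def\<close>)
  then show ?thesis
    using card_range_of_int[where 'c='c] by simp
qed

lemma CHAR_finite_field:
  assumes "CARD('c :: {finite,field}) = p ^ k" "prime p"
  shows "CHAR('c) = p"
proof -
  have "prime CHAR('c)"
    by (intro prime_CHAR_semidom finite_imp_CHAR_pos) simp
  moreover have "CHAR('c) dvd p ^ k"
    using CHAR_dvd_card_UNIV[where 'c = 'c] assms(1) by simp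
  ultimately show ?thesis
    using assms(2) by (metis prime_dvd_power primes_dvd_imp_eq)
qed

section \<open>Polynomials over a field\<close>

definition polys_below :: "nat \<Rightarrow> ('c::zero) poly set" where
  "polys_below D = {h. \<forall>i\<ge>D. coeff h i = 0}"

lemma polys_below_iff: "h \<in> polys_below D \<longleftrightarrow> h = 0 \<or> degree h < D"
proof
  assume h: "h \<in> polys_below D"
  show "h = 0 \<or> degree h < D"
  proof (rule ccontr)
    assume "\<not> (h = 0 \<or> degree h < D)"
    then have "coeff h (degree h) = 0"
      using h by (auto simp: polys_below_def)
    with \<open>\<not> (h = 0 \<or> degree h < D)\<close> show False
      by simp
  qed
qed (auto simp: polys_below_def coeff_eq_0)

lemma polys_below_diff: "x \<in> polys_below D \<Longrightarrow> y \<in> polys_below D \<Longrightarrow> x - y \<in> polys_below D"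
  by (simp add: polys_below_def)

lemma polys_below_mono: "D \<le> D' \<Longrightarrow> polys_below D \<subseteq> polys_below D'"
  by (auto simp: polys_below_def)

lemma polys_below_Suc: "polys_below (Suc D) = (\<lambda>(a,h). pCons a h) ` (UNIV \<times> polys_below D)"
proof (intro equalityI subsetI)
  fix h assume h: "h \<in> polys_below (Suc D)"
  obtain a h' where "h = pCons a h'"
    by (cases h) auto
  moreover have "h' \<in> polys_below D"
    using h unfolding polys_below_def \<open>h = pCons a h'\<close> by (auto simp: coeff_pCons)
  ultimately show "h \<in> (\<lambda>(a,h). pCons a h) ` (UNIV \<times> polys_below D)"
    by auto
qed (auto simp: polys_below_def coeff_pCons split: nat.splits)

lemma finite_card_polys_below:
  "finite (polys_below D :: 'c::{finite,zero} poly set) \<and> card (polys_below D :: 'c poly set) = CARD('c) ^ D"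
proof (induction D)
  case 0
  have "polys_below 0 = {0 :: 'c poly}"
    by (auto simp: polys_below_def poly_eq_iff)
  then show ?case
    by simp
next
  case (Suc D)
  have "inj_on (\<lambda>(a,h). pCons a h) (UNIV \<times> (polys_below D :: 'c poly set))"
    by (auto intro!: inj_onI)
  then show ?case
    using Suc by (simp add: polys_below_Suc card_image card_cartesian_product)
qed

lemma finite_polys_below: "finite (polys_below D :: 'c::{finite,zero} poly set)"
  using finite_card_polys_below by blast

lemma card_polys_below: "card (polys_below D :: 'c::{finite,zero} poly set) = CARD('c) ^ D"
  using finite_card_polys_below by blast

lemma degree_pos_irreducible:
  fixes g :: "'c::field poly"
  assumes "irreducible g"
  shows "degree g \<ge> 1"
proof (rule ccontr)
  assume "\<not> degree g \<ge> 1"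
  moreover have "g \<noteq> 0"
    using assms by auto
  ultimately have "is_unit g"
    by (simp add: is_unit_iff_degree)
  with assms show False
    by (simp add: irreducible_def)
qed

lemma card_roots_factor:
  fixes P h k :: "'c::field poly"
  assumes "P = h * k" "P \<noteq> 0" "card {x. poly P x = 0} = degree P"
  shows "card {x. poly h x = 0} = degree h"
proof -
  have nz: "h \<noteq> 0" "k \<noteq> 0"
    using assms by auto
  have "{x. poly P x = 0} = {x. poly h x = 0} \<union> {x. poly k x = 0}"
    using assms(1) by auto
  then have "card {x. poly P x = 0} \<le> card {x. poly h x = 0} + card {x. poly k x = 0}"
    by (simp add: card_Un_le)
  moreover have "card {x. poly k x = 0} \<le> degree k" "card {x. poly h x = 0} \<le> degree h"
    using nz by (simp_all add: card_poly_roots_bound)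
  moreover have "degree P = degree h + degree k"
    using assms(1) nz by (simp add: degree_mult_eq)
  ultimately show ?thesis
    using assms(3) by linarith
qed

lemma dvd_power_power_minus_self:
  fixes g x :: "'c::euclidean_ring_cancel"
  assumes "g dvd x ^ s - x"
  shows "g dvd x ^ (s ^ k) - x"
proof -
  have base: "x ^ s mod g = x mod g"
    using assms by (simp add: mod_eq_dvd_iff)
  have "x ^ (s ^ k) mod g = x mod g"
  proof (induction k)
    case (Suc k)
    have "x ^ (s ^ Suc k) mod g = ((x ^ (s ^ k) mod g) ^ s) mod g"
      by (simp add: power_mult[symmetric] mult.commute power_mod)
    also have "\<dots> = x mod g"
      using Suc base by (simp add: power_mod)
    finally show ?case .
  qed simp
  then show ?thesis
    by (simp add: mod_eq_dvd_iff)
qed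

lemma prime_elem_dvd_prod_iff:
  fixes p :: "'c::comm_semiring_1"
  assumes "prime_elem p" "finite A"
  shows "p dvd prod f A \<longleftrightarrow> (\<exists>x\<in>A. p dvd f x)"
  using assms(2) by induction (use assms(1) prime_elem_not_unit in \<open>auto simp: prime_elem_dvd_mult_iff\<close>)

text \<open>Euler's argument: multiplication by \<open>a\<close> permutes the residues in \<open>R\<close>, so the product of
  \<open>R\<close> is congruent to \<open>a ^ card R\<close> times itself.\<close>
lemma dvd_power_card_minus_one:
  fixes g a :: "'c::euclidean_ring_cancel"
  assumes g: "prime_elem g" "\<not> g dvd a" and R: "finite R"
    and R_ndvd: "\<And>h. h \<in> R \<Longrightarrow> \<not> g dvd h"
    and R_incongruent: "\<And>h1 h2. h1 \<in> R \<Longrightarrow> h2 \<in> R \<Longrightarrow> g dvd h1 - h2 \<Longrightarrow> h1 = h2"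
    and into: "\<And>h. h \<in> R \<Longrightarrow> (a * h) mod g \<in> R"
  shows "g dvd a ^ card R - 1"
proof -
  let ?m = "\<lambda>h. (a * h) mod g"
  have inj: "inj_on ?m R"
  proof (rule inj_onI)
    fix h1 h2 assume h: "h1 \<in> R" "h2 \<in> R" "?m h1 = ?m h2"
    then have "g dvd a * (h1 - h2)"
      by (simp add: mod_eq_dvd_iff algebra_simps)
    with g h show "h1 = h2"
      by (simp add: prime_elem_dvd_mult_iff R_incongruent)
  qed
  have "?m ` R = R"
    by (rule endo_inj_surj[OF R]) (use into inj in auto)
  then have "prod (\<lambda>h. h) R = prod ?m R"
    using prod.reindex[OF inj, of "\<lambda>h. h"] by simp
  then have "prod (\<lambda>h. a * h) R mod g = prod (\<lambda>h. h) R mod g"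
    by (simp add: mod_prod_eq)
  then have "g dvd prod (\<lambda>h. a * h) R - prod (\<lambda>h. h) R"
    by (simp only: mod_eq_dvd_iff)
  then have "g dvd (a ^ card R - 1) * prod (\<lambda>h. h) R"
    by (simp add: prod.distrib algebra_simps)
  moreover have "\<not> g dvd prod (\<lambda>h. h) R"
    using g R R_ndvd by (simp add: prime_elem_dvd_prod_iff)
  ultimately show ?thesis
    using g by (simp add: prime_elem_dvd_mult_iff)
qed

lemma irreducible_dvd_X_power_card_minus_X:
  fixes g :: "'c::{finite,field} poly"
  assumes irr: "irreducible g"
  shows "g dvd [:0,1:] ^ (CARD('c) ^ degree g) - [:0,1:]"
proof -
  define X :: "'c poly" where "X = [:0,1:]"
  define R where "R = polys_below (degree g) - {0 :: 'c poly}"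
  have g: "prime_elem g" "g \<noteq> 0"
    using irr by (auto simp: field_poly_irreducible_imp_prime)
  have small: "h = 0" if "g dvd h" "h \<in> polys_below (degree g)" for h
    using that dvd_imp_degree_le[of g h] by (cases "h = 0") (auto simp: polys_below_iff)
  have card_R: "card R + 1 = CARD('c) ^ degree g"
  proof -
    have "0 \<in> polys_below (degree g)"
      by (simp add: polys_below_def)
    from card.remove[OF finite_polys_below[where 'c='c] this] show ?thesis
      unfolding R_def using card_polys_below[of "degree g", where 'c='c] by simp
  qed
  have "g dvd X * (X ^ card R - 1)"
  proof (cases "g dvd X")
    case False
    have "g dvd X ^ card R - 1"
    proof (rule dvd_power_card_minus_one[OF g(1) False])
      show "finite R"
        by (simp add: R_def finite_polys_below)
      show "\<not> g dvd h" if "h \<in> R" for h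
        using that small by (auto simp: R_def)
      show "h1 = h2" if "h1 \<in> R" "h2 \<in> R" "g dvd h1 - h2" for h1 h2
        using that small[of "h1 - h2"] polys_below_diff by (auto simp: R_def)
      show "(X * h) mod g \<in> R" if "h \<in> R" for h
        using g False small[of h] that degree_mod_less'[of g "X * h"]
        by (auto simp: R_def polys_below_iff mod_eq_0_iff_dvd prime_elem_dvd_mult_iff)
    qed
    then show ?thesis
      by simp
  qed simp
  also have "X * (X ^ card R - 1) = X ^ (CARD('c) ^ degree g) - X"
    by (simp flip: card_R add: algebra_simps)
  finally show ?thesis
    by (simp add: X_def)
qed

lemma irreducible_dvd_ideal_member:
  fixes g :: "'c::field poly" and I :: "'c poly set"
  assumes irr: "irreducible g" and gI: "g \<in> I"
    and diff: "\<And>x y. x \<in> I \<Longrightarrow> y \<in> I \<Longrightarrow> x - y \<in> I"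
    and mult: "\<And>x k. x \<in> I \<Longrightarrow> k * x \<in> I"
    and proper: "1 \<notin> I"
    and hI: "h \<in> I"
  shows "g dvd h"
proof -
  define d0 where "d0 = (LEAST d. \<exists>m\<in>I. m \<noteq> 0 \<and> degree m = d)"
  obtain m where m: "m \<in> I" "m \<noteq> 0" "degree m = d0"
    using LeastI_ex[of "\<lambda>d. \<exists>m\<in>I. m \<noteq> 0 \<and> degree m = d"] gI irr unfolding d0_def by fastforce
  have m_dvd: "m dvd k" if "k \<in> I" for k
  proof (rule ccontr)
    assume "\<not> m dvd k"
    then have nz: "k mod m \<noteq> 0"
      by (simp add: mod_eq_0_iff_dvd)
    have "k mod m \<in> I"
      using diff[OF that mult[OF m(1), of "k div m"]] by (simp add: minus_div_mult_eq_mod)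
    then have "d0 \<le> degree (k mod m)"
      unfolding d0_def using nz by (auto intro: Least_le)
    moreover have "degree (k mod m) < degree m"
      using m(2) nz by (intro degree_mod_less') auto
    ultimately show False
      using m(3) by simp
  qed
  obtain c where gc: "g = m * c"
    using m_dvd[OF gI] by blast
  have "\<not> is_unit m"
    using mult[OF m(1)] proper by (metis dvd_mult_div_cancel mult.commute)
  then have "is_unit c"
    using irr gc by (auto simp: irreducible_def)
  then have "g dvd m"
    using gc by (simp add: dvd_mult_unit_iff)
  then show ?thesis
    using m_dvd[OF hI] by (rule dvd_trans)
qed

lemma monic_irreducible_dvd_imp_eq:
  fixes g h :: "'c::field poly"
  assumes "irreducible g" "irreducible h" "lead_coeff g = 1" "lead_coeff h = 1" "g dvd h"
  shows "g = h"
proof -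
  obtain c where hc: "h = g * c"
    using assms(5) by blast
  have "is_unit c"
    using assms(1,2) hc by (auto simp: irreducible_def)
  then have "c = [:lead_coeff c:]"
    by (metis is_unit_iff_degree degree_0_id not_is_unit_0)
  moreover have "lead_coeff c = 1"
    using assms(3,4) hc by (simp add: lead_coeff_mult)
  ultimately show ?thesis
    using hc by (simp add: one_pCons)
qed

lemma prod_monic_irreducible_dvd:
  fixes g :: "'j \<Rightarrow> 'c::field poly"
  assumes "finite J" "inj_on g J"
    and "\<And>j. j \<in> J \<Longrightarrow> irreducible (g j) \<and> lead_coeff (g j) = 1" and "\<And>j. j \<in> J \<Longrightarrow> g j dvd h"
  shows "prod g J dvd h"
  using assms
proof (induction J rule: finite_induct)
  case (insert j F)
  have pr: "prime_elem (g j)"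
    using insert.prems(2) by (simp add: field_poly_irreducible_imp_prime)
  have "\<not> g j dvd prod g F"
  proof
    assume "g j dvd prod g F"
    then obtain i where "i \<in> F" "g j dvd g i"
      using prime_elem_dvd_prod_iff[OF pr insert.hyps(1)] by blast
    then have "g j = g i"
      using insert.prems(2) by (intro monic_irreducible_dvd_imp_eq) auto
    with \<open>i \<in> F\<close> insert.hyps(2) insert.prems(1) show False
      by (auto simp: inj_on_def)
  qed
  moreover obtain k where k: "h = prod g F * k"
    using insert by (auto intro: inj_on_subset)
  ultimately have "g j dvd k"
    using pr insert.prems(3)[of j] by (simp add: prime_elem_dvd_mult_iff)
  then show ?case
    using insert.hyps k by (auto simp: mult_ac)
qed simp

lemma monic_polys_translate:
  fixes f0 :: "'c::field poly"
  assumes "f0 \<in> monic_polys d"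
  shows "monic_polys d = (\<lambda>h. h + f0) ` polys_below d"
proof (intro equalityI subsetI)
  fix f :: "'c poly" assume "f \<in> monic_polys d"
  then have "f - f0 \<in> polys_below d"
    using assms by (auto simp: monic_polys_def polys_below_def coeff_eq_0 le_less)
  then show "f \<in> (\<lambda>h. h + f0) ` polys_below d"
    by (intro image_eqI[of _ _ "f - f0"]) simp_all
next
  fix f :: "'c poly" assume "f \<in> (\<lambda>h. h + f0) ` polys_below d"
  then obtain h where h: "h \<in> polys_below d" "f = h + f0"
    by blast
  then have "coeff f d = 1" "\<forall>i>d. coeff f i = 0"
    using assms by (auto simp: monic_polys_def polys_below_def coeff_eq_0)
  then have "degree f = d"
    by (intro antisym degree_le le_degree) auto
  then show "f \<in> monic_polys d"
    using \<open>coeff f d = 1\<close> by (simp add: monic_polys_def)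
qed

lemma monom_monic_polys: "monom 1 d \<in> monic_polys d"
  by (simp add: monic_polys_def degree_monom_eq)

lemma finite_monic_polys: "finite (monic_polys d :: 'c::{finite,field} poly set)"
  unfolding monic_polys_translate[OF monom_monic_polys] by (intro finite_imageI finite_polys_below)

section \<open>Independent Bernoulli indicators\<close>

lemma map_pmf_of_set_uniform_fibres:
  assumes G: "finite G" "G \<noteq> {}" and img: "\<psi> ` G = P"
    and fib: "\<And>x. x \<in> G \<Longrightarrow> card {y\<in>G. \<psi> y = \<psi> x} = k"
  shows "map_pmf \<psi> (pmf_of_set G) = pmf_of_set P"
proof (rule pmf_eqI)
  fix v
  have P: "finite P" "P \<noteq> {}"
    using G img by auto
  have cardG: "card G = card P * k"
    using card_preimage_uniform_fibres[OF G(1) fib, of UNIV] img by simp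
  show "pmf (map_pmf \<psi> (pmf_of_set G)) v = pmf (pmf_of_set P) v"
  proof (cases "v \<in> P")
    case True
    then obtain x where "x \<in> G" "v = \<psi> x"
      using img by blast
    then have "card (G \<inter> \<psi> -` {v}) = k"
      using fib[of x] by (simp add: Int_def conj_commute)
    moreover have "k > 0"
      using G cardG by (metis card_gt_0_iff mult_is_0 not_gr0)
    ultimately show ?thesis
      using G P True cardG by (simp add: pmf_map measure_pmf_of_set)
  next
    case False
    then have "G \<inter> \<psi> -` {v} = {}"
      using img by blast
    then show ?thesis
      using G P False by (simp add: pmf_map measure_pmf_of_set)
  qed
qed

lemma map_pmf_mem_pmf_of_set:
  assumes "finite B" "B \<noteq> {}"
  shows "map_pmf (\<lambda>x. x \<in> A) (pmf_of_set B) = bernoulli_pmf (card (A \<inter> B) / card B)"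
proof (rule pmf_eqI)
  fix b :: bool
  have "card (A \<inter> B) \<le> card B"
    using assms by (intro card_mono) auto
  then have \<theta>: "0 \<le> real (card (A \<inter> B)) / card B" "real (card (A \<inter> B)) / card B \<le> 1"
    using assms by (auto simp: card_gt_0_iff)
  have "card (B - A) = card B - card (A \<inter> B)"
    using assms by (simp add: card_Diff_subset_Int Int_commute)
  then have "real (card (B - A)) / card B = 1 - real (card (A \<inter> B)) / card B"
    using assms \<open>card (A \<inter> B) \<le> card B\<close> by (simp add: of_nat_diff field_simps card_gt_0_iff)
  moreover have "B \<inter> (\<lambda>x. x \<in> A) -` {b} = (if b then A \<inter> B else B - A)"
    by auto
  ultimately show "pmf (map_pmf (\<lambda>x. x \<in> A) (pmf_of_set B)) b
      = pmf (bernoulli_pmf (card (A \<inter> B) / card B)) b"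
    using assms \<theta> by (simp add: pmf_map measure_pmf_of_set)
qed

lemma map_pmf_of_set_PiE_indicators:
  assumes J: "finite J" and B: "\<And>j. j \<in> J \<Longrightarrow> finite (B j) \<and> B j \<noteq> {}"
    and \<theta>: "\<And>j. j \<in> J \<Longrightarrow> card (A \<inter> B j) / card (B j) = \<theta>"
  shows "map_pmf (\<lambda>v j. j \<in> J \<and> v j \<in> A) (pmf_of_set (PiE J B))
       = Pi_pmf J False (\<lambda>_. bernoulli_pmf \<theta>)"
proof -
  let ?X = "\<lambda>j. map_pmf (\<lambda>x. x \<in> A) (pmf_of_set (B j))"
  have "Pi_pmf J False (\<lambda>_. bernoulli_pmf \<theta>) = Pi_pmf J False ?X"
    by (rule Pi_pmf_cong) (simp_all add: map_pmf_mem_pmf_of_set B \<theta>)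
  also have "\<dots> = map_pmf (\<lambda>h j. if j \<in> J then h j else False) (Pi_pmf J (undefined \<in> A) ?X)"
    by (rule Pi_pmf_default_swap[symmetric]) fact
  also have "Pi_pmf J (undefined \<in> A) ?X
      = map_pmf (\<lambda>h. (\<lambda>x. x \<in> A) \<circ> h) (Pi_pmf J undefined (\<lambda>j. pmf_of_set (B j)))"
    by (rule Pi_pmf_map) (simp_all add: J)
  also have "Pi_pmf J undefined (\<lambda>j. pmf_of_set (B j)) = pmf_of_set (PiE J B)"
  proof -
    have "PiE_dflt J undefined B = PiE J B"
      by (auto simp: PiE_dflt_def PiE_def extensional_def)
    then show ?thesis
      using Pi_pmf_of_set[of J B undefined] J B by simp
  qed
  also have "map_pmf (\<lambda>h j. if j \<in> J then h j else False)
      (map_pmf (\<lambda>h. (\<lambda>x. x \<in> A) \<circ> h) (pmf_of_set (PiE J B)))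
      = map_pmf (\<lambda>v j. j \<in> J \<and> v j \<in> A) (pmf_of_set (PiE J B))"
    unfolding map_pmf_comp by (rule map_pmf_cong) (auto simp: fun_eq_iff)
  finally show ?thesis
    by (rule sym)
qed

definition weighted_sum :: "(nat \<times> nat) set \<Rightarrow> (nat \<times> nat \<Rightarrow> bool) \<Rightarrow> nat" where
  "weighted_sum S X = (\<Sum>j\<in>S. fst j * of_bool (X j))"

lemma bern_sum_pmf_eq_weighted_sum:
  assumes "finite E"
  shows "bern_sum_pmf p E \<pi> = map_pmf (weighted_sum (SIGMA e:E. {1..\<pi> e}))
           (Pi_pmf (SIGMA e:E. {1..\<pi> e}) False (\<lambda>_. bernoulli_pmf (1 / real p)))"
proof -
  have "(\<Sum>e\<in>E. e * (\<Sum>i\<in>{1..\<pi> e}. of_bool (X (e, i))))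
      = weighted_sum (SIGMA e:E. {1..\<pi> e}) X" for X
  proof -
    have "(\<Sum>e\<in>E. e * (\<Sum>i\<in>{1..\<pi> e}. of_bool (X (e, i))))
        = (\<Sum>e\<in>E. \<Sum>i\<in>{1..\<pi> e}. e * of_bool (X (e, i)))"
      by (simp only: sum_distrib_left)
    also have "\<dots> = (\<Sum>(e, i)\<in>(SIGMA e:E. {1..\<pi> e}). e * of_bool (X (e, i)))"
      by (rule sum.Sigma) (simp_all add: assms)
    finally show ?thesis
      by (simp add: weighted_sum_def split_beta)
  qed
  then show ?thesis
    unfolding bern_sum_pmf_def by simp
qed

lemma expectation_weighted_sum_Pi_bernoulli:
  assumes S: "finite S" and \<theta>: "0 \<le> \<theta>" "\<theta> \<le> 1"
  shows "measure_pmf.expectation (Pi_pmf S False (\<lambda>_. bernoulli_pmf \<theta>)) (\<lambda>X. real (weighted_sum S X))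
       = \<theta> * (\<Sum>j\<in>S. real (fst j))"
proof -
  let ?P = "Pi_pmf S False (\<lambda>_. bernoulli_pmf \<theta>)"
  have component: "measure_pmf.expectation ?P (\<lambda>X. of_bool (X j)) = \<theta>" if "j \<in> S" for j
  proof -
    have "measure_pmf.expectation ?P (\<lambda>X. of_bool (X j))
        = measure_pmf.expectation (map_pmf (\<lambda>X. X j) ?P) (\<lambda>b. of_bool b :: real)"
      by (subst integral_map_pmf) (rule refl)
    also have "map_pmf (\<lambda>X. X j) ?P = bernoulli_pmf \<theta>"
      using Pi_pmf_component[OF S, of j False] that by simp
    finally show ?thesis
      using \<theta> by simp
  qed
  have integrable: "integrable (measure_pmf ?P) (\<lambda>X. of_bool (X j) :: real)" for j
    by (rule measure_pmf.integrable_const_bound[where B = 1]) auto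
  have "measure_pmf.expectation ?P (\<lambda>X. real (weighted_sum S X))
      = (\<Sum>j\<in>S. real (fst j) * measure_pmf.expectation ?P (\<lambda>X. of_bool (X j)))"
    unfolding weighted_sum_def of_nat_sum of_nat_mult
    by (subst Bochner_Integration.integral_sum) (simp_all add: integrable)
  also have "\<dots> = \<theta> * (\<Sum>j\<in>S. real (fst j))"
    by (simp add: component sum_distrib_left mult.commute)
  finally show ?thesis .
qed

section \<open>Artin--Schreier curves\<close>

locale artin_schreier =
  fixes p n r q :: nat and \<phi> :: "'a::{finite,field} \<Rightarrow> 'b::{finite,field}"
  assumes prime_p: "prime p" and n_pos: "n \<ge> 1" and q_def: "q = p ^ n" and r_pos: "r \<ge> 1"
    and card_a: "CARD('a) = q" and card_b: "CARD('b) = q ^ r" and hom: "is_ring_hom \<phi>"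
begin

lemma p_ge_2: "p \<ge> 2"
  using prime_p by (simp add: prime_ge_2_nat)

lemma q_ge_2: "q \<ge> 2"
proof -
  have "p ^ 1 \<le> p ^ n"
    using n_pos p_ge_2 by (intro power_increasing) auto
  then show ?thesis
    using p_ge_2 q_def by simp
qed

lemma q_power: "q ^ k = p ^ (n * k)"
  by (simp add: q_def power_mult)

lemma CHAR_b: "CHAR('b) = p"
  using card_b prime_p by (intro CHAR_finite_field[of p "n * r"]) (simp_all add: q_power)

lemma power_p_add: "(x + y :: 'b) ^ (p ^ k) = x ^ (p ^ k) + y ^ (p ^ k)"
  by (rule freshmans_dream') (simp_all add: CHAR_b prime_p)

lemma power_p_diff: "(x - y :: 'b) ^ (p ^ k) = x ^ (p ^ k) - y ^ (p ^ k)"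
  using power_p_add[of "x - y" y k] by (simp add: algebra_simps)

lemma power_p_sum: "(sum f A :: 'b) ^ (p ^ k) = (\<Sum>i\<in>A. f i ^ (p ^ k))"
  by (rule freshmans_dream_sum') (simp_all add: CHAR_b prime_p)

lemma power_p_inj: "(x :: 'b) ^ (p ^ k) = y ^ (p ^ k) \<Longrightarrow> x = y"
  using power_p_diff[of x y k] by simp

lemma power_q_add: "(x + y :: 'b) ^ (q ^ k) = x ^ (q ^ k) + y ^ (q ^ k)"
  by (simp add: q_power power_p_add)

lemma power_q_diff: "(x - y :: 'b) ^ (q ^ k) = x ^ (q ^ k) - y ^ (q ^ k)"
  by (simp add: q_power power_p_diff)

lemma power_q_inj: "(x :: 'b) ^ (q ^ k) = y ^ (q ^ k) \<Longrightarrow> x = y"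
  by (simp add: q_power power_p_inj)

lemma phi_add: "\<phi> (x + y) = \<phi> x + \<phi> y"
  and phi_mult: "\<phi> (x * y) = \<phi> x * \<phi> y"
  and phi_1: "\<phi> 1 = 1"
  using hom by (simp_all add: is_ring_hom_def)

lemma phi_0: "\<phi> 0 = 0"
  using phi_add[of 0 0] by (metis add_cancel_right_right add_0)

lemma phi_diff: "\<phi> (x - y) = \<phi> x - \<phi> y"
  using phi_add[of "x - y" y] by (simp add: algebra_simps)

lemma phi_pow: "\<phi> (x ^ k) = \<phi> x ^ k"
  by (induction k) (simp_all add: phi_1 phi_mult)

lemma phi_sum: "\<phi> (sum f A) = (\<Sum>i\<in>A. \<phi> (f i))"
  by (induction A rule: infinite_finite_induct) (simp_all add: phi_0 phi_add)

lemma phi_eq_0_iff: "\<phi> x = 0 \<longleftrightarrow> x = 0"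
  using phi_mult[of x "inverse x"] phi_1 phi_0 by (cases "x = 0") auto

lemma phi_power_q: "\<phi> x ^ (q ^ k) = \<phi> x"
  using finite_field_pow_card_power[of x k] by (simp add: card_a flip: phi_pow)

definition lift :: "'a poly \<Rightarrow> 'b poly" where
  "lift f = map_poly \<phi> f"

lemma coeff_lift: "coeff (lift f) i = \<phi> (coeff f i)"
  by (simp add: lift_def coeff_map_poly phi_0)

lemma lift_add: "lift (f + g) = lift f + lift g"
  and lift_diff: "lift (f - g) = lift f - lift g"
  and lift_mult: "lift (f * g) = lift f * lift g"
  by (rule poly_eqI; simp add: coeff_lift phi_add phi_diff coeff_mult phi_sum phi_mult)+

lemma lift_1: "lift 1 = 1" and lift_X: "lift [:0,1:] = [:0,1:]"
  and lift_pCons: "lift (pCons a f) = pCons (\<phi> a) (lift f)"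
  by (simp_all add: lift_def phi_0 phi_1 map_poly_pCons)

lemma lift_pow: "lift (f ^ k) = lift f ^ k"
  by (induction k) (simp_all add: lift_1 lift_mult)

lemma degree_lift: "degree (lift f) = degree f"
  unfolding lift_def by (rule degree_map_poly) (simp add: phi_eq_0_iff)

lemma lift_dvd: "f dvd g \<Longrightarrow> lift f dvd lift g"
  by (auto simp: lift_mult elim!: dvdE)

definition ev :: "'a poly \<Rightarrow> 'b \<Rightarrow> 'b" where
  "ev f x = poly (lift f) x"

lemma ev_add: "ev (f + g) x = ev f x + ev g x"
  and ev_diff: "ev (f - g) x = ev f x - ev g x"
  and ev_mult: "ev (f * g) x = ev f x * ev g x"
  and ev_1: "ev 1 x = 1"
  and ev_pCons: "ev (pCons a f) x = \<phi> a + x * ev f x"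
  by (simp_all add: ev_def lift_add lift_diff lift_mult lift_1 lift_pCons)

text \<open>The coefficients of \<open>f\<close> are fixed by the \<open>q\<close>-power Frobenius.\<close>
lemma ev_power_q: "ev f (x ^ (q ^ k)) = ev f x ^ (q ^ k)"
  using q_ge_2 by (induction f rule: pCons_induct)
    (simp_all add: ev_def lift_def ev_pCons[unfolded ev_def lift_def] power_q_add
      phi_power_q power_mult_distrib)

definition frob_fixed :: "nat \<Rightarrow> 'b set" where
  "frob_fixed m = {x. x ^ (q ^ m) = x}"

definition frob_poly :: "nat \<Rightarrow> 'b poly" where
  "frob_poly m = [:0,1:] ^ (q ^ m) - [:0,1:]"

lemma ev_frob_fixed: "x \<in> frob_fixed m \<Longrightarrow> ev f x \<in> frob_fixed m"
  by (simp add: frob_fixed_def flip: ev_power_q)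

lemma frob_fixed_diff: "x \<in> frob_fixed m \<Longrightarrow> y \<in> frob_fixed m \<Longrightarrow> x - y \<in> frob_fixed m"
  and frob_fixed_add: "x \<in> frob_fixed m \<Longrightarrow> y \<in> frob_fixed m \<Longrightarrow> x + y \<in> frob_fixed m"
  by (simp_all add: frob_fixed_def power_q_diff power_q_add)

lemma frob_fixed_r: "frob_fixed r = UNIV"
  using finite_field_pow_card[where 'c='b] by (simp add: frob_fixed_def card_b)

lemma frob_fixed_mult: "x \<in> frob_fixed m \<Longrightarrow> x \<in> frob_fixed (k * m)"
proof (induction k)
  case (Suc k)
  have "x ^ (q ^ (Suc k * m)) = (x ^ (q ^ m)) ^ (q ^ (k * m))"
    by (simp add: power_add power_mult mult.commute)
  with Suc show ?case
    by (simp add: frob_fixed_def)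
qed (simp add: frob_fixed_def)

lemma frob_fixed_gcd:
  assumes "x \<in> frob_fixed a" "x \<in> frob_fixed b" "a \<ge> 1"
  shows "x \<in> frob_fixed (gcd a b)"
proof -
  obtain u v where uv: "a * u = b * v + gcd a b"
    using bezout_nat[of a b] assms(3) by auto
  have "x = x ^ (q ^ (b * v + gcd a b))"
    using frob_fixed_mult[OF assms(1), of u] uv by (simp add: frob_fixed_def mult.commute)
  also have "\<dots> = (x ^ (q ^ (b * v))) ^ (q ^ gcd a b)"
    by (simp add: power_add power_mult)
  also have "x ^ (q ^ (b * v)) = x"
    using frob_fixed_mult[OF assms(2), of v] by (simp add: frob_fixed_def mult.commute)
  finally show ?thesis
    by (simp add: frob_fixed_def)
qed

lemma roots_frob_poly: "{x. poly (frob_poly m) x = 0} = frob_fixed m"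
  by (simp add: frob_poly_def frob_fixed_def)

lemma degree_frob_poly:
  assumes "m \<ge> 1"
  shows "degree (frob_poly m) = q ^ m"
proof -
  have "q ^ m > 1"
    using q_ge_2 assms by (intro one_less_power) auto
  then show ?thesis
    unfolding frob_poly_def diff_conv_add_uminus
    by (subst degree_add_eq_left) (simp_all add: degree_power_eq)
qed

lemma frob_poly_nonzero: "m \<ge> 1 \<Longrightarrow> frob_poly m \<noteq> 0"
  using degree_frob_poly[of m] q_ge_2 by (metis degree_0 power_eq_0_iff not_numeral_le_zero)

lemma card_frob_fixed_le: "m \<ge> 1 \<Longrightarrow> card (frob_fixed m) \<le> q ^ m"
  using card_poly_roots_bound[OF frob_poly_nonzero] roots_frob_poly degree_frob_poly by metis

lemma frob_poly_dvd: "m dvd k \<Longrightarrow> frob_poly m dvd frob_poly k"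
  unfolding frob_poly_def
  using dvd_power_power_minus_self[of "[:0,1:] ^ (q ^ m) - [:0,1:]" "[:0,1:]" "q ^ m"]
  by (auto simp flip: power_mult)

text \<open>Every element of \<open>'b\<close> is a root of \<open>frob_poly r\<close>, so each of its factors has as many
  roots as its degree.\<close>
lemma card_roots_dvd_frob_poly:
  assumes "P dvd frob_poly r"
  shows "card {x. poly P x = 0} = degree P"
proof -
  obtain h where h: "frob_poly r = P * h"
    using assms by blast
  have "card {x. poly (frob_poly r) x = 0} = degree (frob_poly r)"
    using roots_frob_poly[of r] frob_fixed_r degree_frob_poly[OF r_pos] card_b by simp
  then show ?thesis
    using card_roots_factor[OF h frob_poly_nonzero[OF r_pos]] by simp
qed

lemma card_frob_fixed:
  assumes "m dvd r" "m \<ge> 1"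
  shows "card (frob_fixed m) = q ^ m"
  using card_roots_dvd_frob_poly[OF frob_poly_dvd[OF assms(1)]] roots_frob_poly
    degree_frob_poly[OF assms(2)] by simp

definition monic_irr :: "nat \<Rightarrow> 'a poly set" where
  "monic_irr e = {g. lead_coeff g = 1 \<and> degree g = e \<and> irreducible g}"

definition lift_roots :: "'a poly \<Rightarrow> 'b set" where
  "lift_roots g = {x. ev g x = 0}"

lemma finite_monic_irr: "finite (monic_irr e)"
  by (rule finite_subset[OF _ finite_polys_below[of "Suc e"]]) (auto simp: monic_irr_def polys_below_iff)

lemma num_monic_irred_eq: "num_monic_irred TYPE('a) e = card (monic_irr e)"
  by (simp add: num_monic_irred_def monic_irr_def)

lemma irreducible_dvd_of_root:
  assumes "irreducible g" "ev g x = 0" "ev h x = 0"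
  shows "g dvd h"
  by (rule irreducible_dvd_ideal_member[where I = "{h. ev h x = 0}"])
    (use assms in \<open>auto simp: ev_diff ev_mult ev_1\<close>)

lemma lift_dvd_frob_poly_degree:
  assumes "irreducible g"
  shows "lift g dvd frob_poly (degree g)"
  using lift_dvd[OF irreducible_dvd_X_power_card_minus_X[OF assms]]
  by (simp add: lift_diff lift_pow lift_X card_a frob_poly_def)

lemma root_frob_fixed_degree:
  assumes "irreducible g" "ev g x = 0"
  shows "x \<in> frob_fixed (degree g)"
proof -
  obtain k where "frob_poly (degree g) = lift g * k"
    using lift_dvd_frob_poly_degree[OF assms(1)] by (elim dvdE) blast
  then have "poly (frob_poly (degree g)) x = 0"
    using assms(2) by (simp add: ev_def)
  then show ?thesis
    using roots_frob_poly by blast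
qed

lemma inj_on_ev_polys_below:
  assumes "irreducible g" "ev g x = 0"
  shows "inj_on (\<lambda>h. ev h x) (polys_below (degree g))"
proof (rule inj_onI)
  fix h1 h2
  assume h: "h1 \<in> polys_below (degree g)" "h2 \<in> polys_below (degree g)" "ev h1 x = ev h2 x"
  then have "g dvd h1 - h2"
    using assms by (intro irreducible_dvd_of_root) (simp_all add: ev_diff)
  moreover have "h1 - h2 \<in> polys_below (degree g)"
    using h polys_below_diff by blast
  ultimately show "h1 = h2"
    using dvd_imp_degree_le[of g "h1 - h2"] by (cases "h1 = h2") (auto simp: polys_below_iff)
qed

text \<open>The values \<open>ev h x\<close> for \<open>degree h < degree g\<close> are distinct elements of \<open>frob_fixed m\<close>.\<close>
lemma degree_le_of_root_frob_fixed:
  assumes "irreducible g" "ev g x = 0" "m \<ge> 1" "x \<in> frob_fixed m"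
  shows "degree g \<le> m"
proof -
  have "q ^ degree g = card ((\<lambda>h. ev h x) ` polys_below (degree g))"
    using card_image[OF inj_on_ev_polys_below[OF assms(1,2)]] card_polys_below[where 'c='a] card_a
    by simp
  also have "\<dots> \<le> card (frob_fixed m)"
    using ev_frob_fixed[OF assms(4)] by (intro card_mono) auto
  also have "\<dots> \<le> q ^ m"
    using card_frob_fixed_le[OF assms(3)] .
  finally show ?thesis
    using q_ge_2 by (simp add: power_le_imp_le_exp)
qed

lemma degree_dvd_of_root_frob_fixed:
  assumes "irreducible g" "ev g x = 0" "m \<ge> 1" "x \<in> frob_fixed m"
  shows "degree g dvd m"
proof -
  have "x \<in> frob_fixed (gcd m (degree g))"
    using frob_fixed_gcd[OF assms(4) root_frob_fixed_degree[OF assms(1,2)] assms(3)] .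
  then have "degree g \<le> gcd m (degree g)"
    using assms(1,2,3) by (intro degree_le_of_root_frob_fixed) (simp_all add: Suc_le_eq)
  then show ?thesis
    using degree_pos_irreducible[OF assms(1)] by (metis gcd_dvd1 gcd_le2_nat le_antisym not_one_le_zero)
qed

lemma card_lift_roots:
  assumes "g \<in> monic_irr e" "e dvd r"
  shows "card (lift_roots g) = e"
proof -
  have "lift g dvd frob_poly (degree g)"
    using assms(1) by (intro lift_dvd_frob_poly_degree) (simp add: monic_irr_def)
  also have "frob_poly (degree g) dvd frob_poly r"
    using assms by (intro frob_poly_dvd) (simp add: monic_irr_def)
  finally show ?thesis
    using card_roots_dvd_frob_poly assms(1) by (simp add: lift_roots_def ev_def degree_lift monic_irr_def)
qed

lemma lift_roots_orbit:
  assumes g: "g \<in> monic_irr e" "e dvd r" and b: "ev g b = 0"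
  shows "lift_roots g = (\<lambda>k. b ^ (q ^ k)) ` {..<e}"
proof -
  have irr: "irreducible g" and deg: "degree g = e"
    using g(1) by (auto simp: monic_irr_def)
  have "b ^ (q ^ i) \<noteq> b ^ (q ^ k)" if "i < k" "k < e" for i k
  proof
    assume "b ^ (q ^ i) = b ^ (q ^ k)"
    then have "b ^ (q ^ i) = (b ^ (q ^ (k - i))) ^ (q ^ i)"
      using that by (simp flip: power_mult power_add)
    then have "b \<in> frob_fixed (k - i)"
      by (auto simp: frob_fixed_def dest: power_q_inj)
    moreover have "k - i \<ge> 1"
      using that by simp
    ultimately show False
      using degree_le_of_root_frob_fixed[OF irr b, of "k - i"] that deg by simp
  qed
  then have "inj_on (\<lambda>k. b ^ (q ^ k)) {..<e}"
    by (intro inj_onI) (metis lessThan_iff linorder_neqE_nat)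
  then have "card ((\<lambda>k. b ^ (q ^ k)) ` {..<e}) = card (lift_roots g)"
    using card_lift_roots[OF g] by (simp add: card_image)
  moreover have "(\<lambda>k. b ^ (q ^ k)) ` {..<e} \<subseteq> lift_roots g"
    using b q_ge_2 by (auto simp: lift_roots_def ev_power_q)
  ultimately show ?thesis
    by (metis card_subset_eq finite)
qed

lemma disjoint_lift_roots:
  assumes "g1 \<in> monic_irr e1" "g2 \<in> monic_irr e2" "g1 \<noteq> g2"
  shows "lift_roots g1 \<inter> lift_roots g2 = {}"
proof (rule ccontr)
  assume "lift_roots g1 \<inter> lift_roots g2 \<noteq> {}"
  then obtain x where "ev g1 x = 0" "ev g2 x = 0"
    by (auto simp: lift_roots_def)
  then have "g1 dvd g2"
    using irreducible_dvd_of_root assms(1) by (auto simp: monic_irr_def)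
  with assms show False
    using monic_irreducible_dvd_imp_eq by (auto simp: monic_irr_def)
qed

lemma ex_monic_irreducible_root:
  assumes "h \<noteq> 0" "ev h x = 0"
  shows "\<exists>g. irreducible g \<and> lead_coeff g = 1 \<and> ev g x = 0"
  using assms
proof (induction "degree h" arbitrary: h rule: less_induct)
  case less
  show ?case
  proof (cases "irreducible h")
    case True
    define c where "c = inverse (lead_coeff h)"
    have "is_unit [:c:]"
      using less.prems by (simp add: c_def is_unit_const_poly_iff dvd_field_iff)
    then have "irreducible ([:c:] * h)"
      using True irreducible_mult_unit_left by blast
    moreover have "lead_coeff ([:c:] * h) = 1"
      using less.prems by (simp add: c_def lead_coeff_mult)
    moreover have "ev ([:c:] * h) x = 0"
      using less.prems ev_mult[of "[:c:]" h x] by simp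
    ultimately show ?thesis
      by blast
  next
    case False
    have "\<not> is_unit h"
    proof
      assume "is_unit h"
      then have "h = [:coeff h 0:]" "coeff h 0 \<noteq> 0"
        using less.prems by (auto simp: is_unit_iff_degree elim: degree_eq_zeroE)
      then show False
        using less.prems ev_pCons[of "coeff h 0" 0 x] by (simp add: phi_eq_0_iff ev_def lift_def)
    qed
    then obtain a b where ab: "h = a * b" "\<not> is_unit a" "\<not> is_unit b"
      using False less.prems by (auto simp: irreducible_def)
    then have "a \<noteq> 0" "b \<noteq> 0" "degree a < degree h" "degree b < degree h"
      using less.prems by (auto simp: degree_mult_eq is_unit_iff_degree)
    moreover have "ev a x = 0 \<or> ev b x = 0"
      using less.prems ab by (simp add: ev_mult)
    ultimately show ?thesis
      using less.hyps by blast
  qed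
qed

text \<open>Pigeonhole: \<open>h \<mapsto> ev h x\<close> cannot be injective on the \<open>q ^ Suc r\<close> polynomials of degree \<open>\<le> r\<close>.\<close>
lemma ex_nonzero_poly_root: "\<exists>h. h \<noteq> 0 \<and> ev h x = 0"
proof -
  have "\<not> inj_on (\<lambda>h. ev h x) (polys_below (Suc r))"
  proof
    assume "inj_on (\<lambda>h. ev h x) (polys_below (Suc r))"
    then have "q ^ Suc r = card ((\<lambda>h. ev h x) ` polys_below (Suc r))"
      by (simp add: card_image card_polys_below card_a)
    also have "\<dots> \<le> q ^ r"
      using card_mono[of UNIV "(\<lambda>h. ev h x) ` polys_below (Suc r)"] card_b by simp
    finally show False
      using q_ge_2 by simp
  qed
  then obtain h1 h2 where "h1 \<noteq> h2" "ev h1 x = ev h2 x"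
    by (auto simp: inj_on_def)
  then show ?thesis
    by (intro exI[of _ "h1 - h2"]) (simp add: ev_diff)
qed

lemma ex_monic_irr_root: "\<exists>e g. e dvd r \<and> g \<in> monic_irr e \<and> ev g x = 0"
proof -
  obtain g where g: "irreducible g" "lead_coeff g = 1" "ev g x = 0"
    using ex_nonzero_poly_root ex_monic_irreducible_root by blast
  then have "degree g dvd r"
    using degree_dvd_of_root_frob_fixed[OF g(1) g(3) r_pos] frob_fixed_r by simp
  then show ?thesis
    using g by (auto simp: monic_irr_def)
qed

definition as_map :: "'b \<Rightarrow> 'b" where
  "as_map y = y ^ p - y"

definition as_image :: "'b set" where
  "as_image = range as_map"

definition prime_field :: "'b set" where
  "prime_field = {y. y ^ p = y}"

definition abs_trace :: "nat \<Rightarrow> 'b \<Rightarrow> 'b" where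
  "abs_trace M c = (\<Sum>i<M. c ^ (p ^ i))"

lemma card_prime_field: "card prime_field = p"
proof (rule antisym)
  have "degree ([:0,1::'b:] ^ p - [:0,1:]) = p"
    using p_ge_2 unfolding diff_conv_add_uminus
    by (subst degree_add_eq_left) (simp_all add: degree_power_eq)
  moreover have "{x. poly ([:0,1::'b:] ^ p - [:0,1:]) x = 0} = prime_field"
    by (simp add: prime_field_def)
  ultimately show "card prime_field \<le> p"
    using card_poly_roots_bound[of "[:0,1::'b:] ^ p - [:0,1:]"] p_ge_2 by force
next
  have "(of_nat k :: 'b) ^ p = of_nat k" for k
    using power_p_add[of 1 _ 1] p_ge_2 by (induction k) auto
  then have "of_nat ` {..<p} \<subseteq> prime_field"
    by (auto simp: prime_field_def)
  then have "card ((of_nat :: nat \<Rightarrow> 'b) ` {..<p}) \<le> card prime_field"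
    by (intro card_mono) auto
  then show "p \<le> card prime_field"
    using inj_on_of_nat_CHAR[where 'c='b] CHAR_b by (simp add: card_image)
qed

lemma as_map_eq_iff: "as_map x = as_map y \<longleftrightarrow> x - y \<in> prime_field"
proof -
  have "as_map (x - y) = as_map x - as_map y"
    using power_p_diff[of x y 1] by (simp add: as_map_def)
  then have "as_map x = as_map y \<longleftrightarrow> as_map (x - y) = 0"
    by simp
  then show ?thesis
    by (simp add: as_map_def prime_field_def)
qed

lemma card_as_map_fibre: "card {y. as_map y = as_map x} = p"
  using card_fibre_translate[of UNIV as_map prime_field x UNIV] as_map_eq_iff card_prime_field
  by (auto simp: surj_def)

lemma card_as_image: "card as_image * p = CARD('b)"
  using card_preimage_uniform_fibres[of UNIV as_map p UNIV] card_as_map_fibre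
  by (simp add: as_image_def)

lemma N_AS_eq_card: "N_AS p \<phi> f = card {x. ev f x \<in> as_image}"
proof -
  have "{xy :: 'b \<times> 'b. snd xy ^ p - snd xy = poly (map_poly \<phi> f) (fst xy)}
      = (SIGMA x:UNIV. {y. as_map y = ev f x})"
    by (auto simp: as_map_def ev_def lift_def)
  moreover have "card {y. as_map y = ev f x} = (if ev f x \<in> as_image then p else 0)" for x
    using card_as_map_fibre by (auto simp: as_image_def) (metis rangeI)
  ultimately have "AS_points p \<phi> f = (\<Sum>x\<in>UNIV. if ev f x \<in> as_image then p else 0) + 1"
    unfolding AS_points_def by (simp add: card_SigmaI)
  also have "(\<Sum>x\<in>UNIV. if ev f x \<in> as_image then p else 0) = p * card {x. ev f x \<in> as_image}"
    by (simp add: sum.If_cases Int_def)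
  finally show ?thesis
    using p_ge_2 by (simp add: N_AS_def)
qed


lemma abs_trace_diff: "abs_trace M (x - y) = abs_trace M x - abs_trace M y"
  by (simp add: abs_trace_def power_p_diff sum_subtractf)

lemma abs_trace_power_p: "abs_trace M (c ^ p) = abs_trace M c ^ p"
proof -
  have "abs_trace M c ^ p = (\<Sum>i<M. (c ^ (p ^ i)) ^ p)"
    using power_p_sum[of "\<lambda>i. c ^ (p ^ i)" "{..<M}" 1] by (simp add: abs_trace_def)
  also have "\<dots> = abs_trace M (c ^ p)"
    unfolding abs_trace_def by (intro sum.cong refl) (simp add: mult.commute flip: power_mult)
  finally show ?thesis
    by simp
qed

lemma abs_trace_in_prime_field:
  assumes "c ^ (p ^ M) = c"
  shows "abs_trace M c ^ p = abs_trace M c"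
proof -
  have "(\<Sum>i<M. c ^ (p ^ Suc i) - c ^ (p ^ i)) = c ^ (p ^ M) - c ^ (p ^ 0)"
    by (rule sum_lessThan_telescope)
  then have "(\<Sum>i<M. c ^ (p ^ Suc i)) = abs_trace M c"
    using assms by (simp add: abs_trace_def sum_subtractf)
  moreover have "(\<Sum>i<M. c ^ (p ^ Suc i)) = abs_trace M (c ^ p)"
    unfolding abs_trace_def by (intro sum.cong refl) (simp add: mult.commute flip: power_mult)
  ultimately show ?thesis
    by (simp add: abs_trace_power_p)
qed

lemma card_abs_trace_roots:
  assumes "M \<ge> 1"
  shows "card {c. abs_trace M c = 0} \<le> p ^ (M - 1)"
proof -
  define P :: "'b poly" where "P = (\<Sum>i<M. monom 1 (p ^ i))"
  have "poly P c = abs_trace M c" for c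
    by (simp add: P_def abs_trace_def poly_sum poly_monom)
  moreover have "degree P \<le> p ^ (M - 1)"
    unfolding P_def using p_ge_2
    by (intro degree_sum_le) (auto simp: degree_monom_eq intro: power_increasing)
  moreover have "P \<noteq> 0"
  proof -
    have "coeff P (p ^ (M - 1)) = (\<Sum>i<M. if i = M - 1 then 1 else 0)"
      unfolding P_def coeff_sum coeff_monom
      using p_ge_2 by (intro sum.cong refl) (simp add: power_inject_exp eq_commute)
    then show ?thesis
      using assms by auto
  qed
  ultimately show ?thesis
    using card_poly_roots_bound[of P] by simp
qed

lemma abs_trace_mult:
  assumes "(c :: 'b) ^ (p ^ M) = c"
  shows "abs_trace (M * k) c = of_nat k * abs_trace M c"
proof (induction k)
  case (Suc k)
  have period: "c ^ (p ^ (M * k)) = c"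
    using assms by (induction k) (simp_all add: power_add power_mult)
  have split: "abs_trace (a + b) c = abs_trace a c + (\<Sum>i<b. c ^ (p ^ (a + i)))" for a b
    by (induction b) (simp_all add: abs_trace_def)
  have "abs_trace (M * Suc k) c = abs_trace (M * k) c + (\<Sum>i<M. c ^ (p ^ (M * k + i)))"
    using split[of "M * k" M] by (simp add: add.commute)
  also have "(\<Sum>i<M. c ^ (p ^ (M * k + i))) = abs_trace M c"
    unfolding abs_trace_def using period by (intro sum.cong refl) (simp add: power_add power_mult)
  finally show ?case
    using Suc by (simp add: add.commute algebra_simps)
qed (simp add: abs_trace_def)

lemma as_image_eq: "as_image = {c. abs_trace (n * r) c = 0}"
proof -
  have fixed: "c ^ (p ^ (n * r)) = c" for c :: 'b
    using finite_field_pow_card[of c] by (simp add: card_b q_power)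
  have sub: "as_image \<subseteq> {c. abs_trace (n * r) c = 0}"
    using abs_trace_in_prime_field[OF fixed]
    by (auto simp: as_image_def as_map_def abs_trace_diff abs_trace_power_p)
  have "n * r \<ge> 1"
    using n_pos r_pos by simp
  then have "card as_image * p = p ^ (n * r - 1) * p"
    using card_as_image by (simp add: card_b q_power flip: power_Suc2)
  then have "card {c. abs_trace (n * r) c = 0} \<le> card as_image"
    using card_abs_trace_roots[OF \<open>n * r \<ge> 1\<close>] p_ge_2 by simp
  then show ?thesis
    using sub by (intro card_seteq) auto
qed

lemma as_image_power_q: "c ^ (q ^ k) \<in> as_image \<longleftrightarrow> c \<in> as_image"
proof -
  have "abs_trace (n * r) (c ^ (p ^ j)) = abs_trace (n * r) c" for j
  proof (induction j)
    case (Suc j)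
    have "abs_trace (n * r) (c ^ (p ^ Suc j)) = abs_trace (n * r) (c ^ (p ^ j)) ^ p"
      by (metis abs_trace_power_p power_Suc2 power_mult)
    also have "\<dots> = abs_trace (n * r) (c ^ (p ^ j))"
      using finite_field_pow_card[of "c ^ (p ^ j)"]
      by (intro abs_trace_in_prime_field) (simp add: card_b q_power)
    finally show ?case
      using Suc by simp
  qed simp
  then show ?thesis
    by (simp add: as_image_eq q_power)
qed

lemma frob_fixed_power_p: "c \<in> frob_fixed e \<Longrightarrow> c ^ (p ^ (n * e)) = c"
  by (simp add: frob_fixed_def q_power)

lemma frob_fixed_translate:
  assumes "x0 \<in> frob_fixed m"
  shows "frob_fixed m = (\<lambda>h. h + x0) ` frob_fixed m"
proof (intro equalityI subsetI)
  fix x assume "x \<in> frob_fixed m"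
  then show "x \<in> (\<lambda>h. h + x0) ` frob_fixed m"
    using assms by (intro image_eqI[of _ _ "x - x0"]) (simp_all add: frob_fixed_diff)
qed (use assms frob_fixed_add in auto)

lemma frob_fixed_subset_as_image:
  assumes "e dvd r" "p dvd r div e"
  shows "frob_fixed e \<subseteq> as_image"
proof
  fix c assume c: "c \<in> frob_fixed e"
  have "abs_trace (n * r) c = of_nat (r div e) * abs_trace (n * e) c"
    using abs_trace_mult[OF frob_fixed_power_p[OF c], of "r div e"] assms(1) by (simp add: mult.assoc)
  also have "(of_nat (r div e) :: 'b) = 0"
    using assms(2) CHAR_b by (simp add: of_nat_eq_0_iff_char_dvd)
  finally show "c \<in> as_image"
    by (simp add: as_image_eq)
qed

text \<open>Here the trace from \<open>frob_fixed e\<close> is onto the prime field and \<open>as_image\<close> is its kernel.\<close>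
lemma card_as_image_frob_fixed:
  assumes e: "e dvd r" "e \<ge> 1" and nd: "\<not> p dvd r div e"
  shows "card (as_image \<inter> frob_fixed e) * p = q ^ e"
proof -
  let ?T = "abs_trace (n * e)"
  define Z where "Z = {c. ?T c = 0}"
  have "(of_nat (r div e) :: 'b) \<noteq> 0"
    using nd CHAR_b by (simp add: of_nat_eq_0_iff_char_dvd)
  then have AZ: "as_image \<inter> frob_fixed e = Z \<inter> frob_fixed e"
    using abs_trace_mult[OF frob_fixed_power_p, of _ e "r div e"] e(1)
    by (auto simp: as_image_eq Z_def mult.assoc)
  have fib: "card {y\<in>frob_fixed e. ?T y = ?T x} = card (Z \<inter> frob_fixed e)" if "x \<in> frob_fixed e" for x
    by (rule card_fibre_translate[OF _ that frob_fixed_translate[OF that]])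
      (simp add: Z_def abs_trace_diff)
  have "?T ` frob_fixed e \<subseteq> prime_field"
    using abs_trace_in_prime_field[OF frob_fixed_power_p] by (auto simp: prime_field_def)
  then have image_le: "card (?T ` frob_fixed e) \<le> p"
    using card_mono[of prime_field] card_prime_field by fastforce
  have kernel_le: "card (Z \<inter> frob_fixed e) \<le> p ^ (n * e - 1)"
    using card_mono[of Z "Z \<inter> frob_fixed e"] card_abs_trace_roots[of "n * e"] n_pos e(2)
    by (simp add: Z_def)
  have "p ^ (n * e - 1) * p = q ^ e"
    using n_pos e(2) by (simp add: q_power flip: power_Suc2)
  also have "\<dots> = card (?T ` frob_fixed e) * card (Z \<inter> frob_fixed e)"
    using card_preimage_uniform_fibres[OF _ fib, of UNIV] card_frob_fixed[OF e] by simp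
  also have "\<dots> \<le> p * card (Z \<inter> frob_fixed e)"
    using image_le by (rule mult_right_mono) simp
  finally have "card (Z \<inter> frob_fixed e) = p ^ (n * e - 1)"
    using kernel_le p_ge_2 by (simp add: mult.commute)
  then have "card (Z \<inter> frob_fixed e) * p = q ^ e"
    using n_pos e(2) by (simp add: q_power flip: power_Suc2)
  then show ?thesis
    using AZ by simp
qed

subsection \<open>Frobenius orbits of \<open>'b\<close>\<close>

text \<open>The orbits of the \<open>q\<close>-power Frobenius on \<open>'b\<close> are the root sets of the monic
  irreducible polynomials of degree dividing \<open>r\<close>; the pair \<open>(e, i)\<close> indexes the \<open>i\<close>-th of the
  \<open>\<pi>(e)\<close> orbits of length \<open>e\<close>, and \<open>idx_root\<close> picks a representative.\<close>
definition irr_index :: "nat set \<Rightarrow> (nat \<times> nat) set" where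
  "irr_index E = (SIGMA e:E. {1..num_monic_irred TYPE('a) e})"

definition orbits :: "(nat \<times> nat) set" where
  "orbits = irr_index {e. e dvd r}"

definition irr_enum :: "nat \<Rightarrow> nat \<Rightarrow> 'a poly" where
  "irr_enum e = (SOME h. bij_betw h {1..card (monic_irr e)} (monic_irr e))"

definition idx_poly :: "nat \<times> nat \<Rightarrow> 'a poly" where
  "idx_poly j = irr_enum (fst j) (snd j)"

definition idx_root :: "nat \<times> nat \<Rightarrow> 'b" where
  "idx_root j = (SOME x. ev (idx_poly j) x = 0)"

lemma bij_betw_irr_enum: "bij_betw (irr_enum e) {1..card (monic_irr e)} (monic_irr e)"
  using ex_bij_betw_nat_finite_1[OF finite_monic_irr] unfolding irr_enum_def by (rule someI_ex)

lemma finite_irr_index: "finite E \<Longrightarrow> finite (irr_index E)"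
  by (simp add: irr_index_def)

lemma finite_orbits: "finite orbits"
  unfolding orbits_def using r_pos by (intro finite_irr_index finite_divisors_nat) simp

lemma orbits_iff: "j \<in> orbits \<longleftrightarrow> fst j dvd r \<and> snd j \<in> {1..card (monic_irr (fst j))}"
  by (cases j) (simp add: orbits_def irr_index_def num_monic_irred_eq)

lemma orbit_degree_dvd: "j \<in> orbits \<Longrightarrow> fst j dvd r"
  by (simp add: orbits_iff)

lemma orbit_degree_pos: "j \<in> orbits \<Longrightarrow> fst j \<ge> 1"
  using r_pos orbit_degree_dvd[of j] by (cases "fst j") auto

lemma idx_poly_monic_irr: "j \<in> orbits \<Longrightarrow> idx_poly j \<in> monic_irr (fst j)"
  using bij_betw_irr_enum[of "fst j"] by (auto simp: orbits_iff idx_poly_def bij_betw_def)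

lemma inj_on_idx_poly: "inj_on idx_poly orbits"
proof (rule inj_onI)
  fix j j' assume j: "j \<in> orbits" "j' \<in> orbits" "idx_poly j = idx_poly j'"
  then have same_degree: "fst j = fst j'"
    using idx_poly_monic_irr[OF j(1)] idx_poly_monic_irr[OF j(2)] by (simp add: monic_irr_def)
  have "irr_enum (fst j) (snd j) = irr_enum (fst j) (snd j')"
    using j(3) same_degree by (simp add: idx_poly_def)
  moreover have "snd j \<in> {1..card (monic_irr (fst j))}" "snd j' \<in> {1..card (monic_irr (fst j))}"
    using j(1,2) same_degree by (simp_all add: orbits_iff)
  ultimately have "snd j = snd j'"
    using inj_onD[OF bij_betw_imp_inj_on[OF bij_betw_irr_enum]] by blast
  with same_degree show "j = j'"
    by (simp add: prod_eq_iff)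
qed

lemma card_lift_roots_idx_poly: "j \<in> orbits \<Longrightarrow> card (lift_roots (idx_poly j)) = fst j"
  by (simp add: card_lift_roots idx_poly_monic_irr orbit_degree_dvd)

lemma idx_root_root:
  assumes "j \<in> orbits"
  shows "ev (idx_poly j) (idx_root j) = 0"
proof -
  have "lift_roots (idx_poly j) \<noteq> {}"
    using card_lift_roots_idx_poly[OF assms] orbit_degree_pos[OF assms] by auto
  then have "\<exists>x. ev (idx_poly j) x = 0"
    by (auto simp: lift_roots_def)
  then show ?thesis
    unfolding idx_root_def by (rule someI_ex)
qed

lemma idx_root_frob_fixed: "j \<in> orbits \<Longrightarrow> idx_root j \<in> frob_fixed (fst j)"
  using root_frob_fixed_degree[OF _ idx_root_root] idx_poly_monic_irr by (simp add: monic_irr_def)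

lemma lift_roots_idx_poly_orbit:
  "j \<in> orbits \<Longrightarrow> lift_roots (idx_poly j) = (\<lambda>k. idx_root j ^ (q ^ k)) ` {..<fst j}"
  by (simp add: lift_roots_orbit idx_poly_monic_irr orbit_degree_dvd idx_root_root)

lemma ex_orbit: "\<exists>j\<in>orbits. x \<in> lift_roots (idx_poly j)"
proof -
  obtain e g where eg: "e dvd r" "g \<in> monic_irr e" "ev g x = 0"
    using ex_monic_irr_root by blast
  moreover have "g \<in> irr_enum e ` {1..card (monic_irr e)}"
    using bij_betw_irr_enum[of e] eg(2) by (simp add: bij_betw_def)
  ultimately obtain i where "i \<in> {1..card (monic_irr e)}" "irr_enum e i = g"
    by blast
  with eg show ?thesis
    by (intro bexI[of _ "(e, i)"]) (simp_all add: idx_poly_def lift_roots_def orbits_iff)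
qed

lemma disjoint_orbits:
  assumes "j \<in> orbits" "j' \<in> orbits" "j \<noteq> j'"
  shows "lift_roots (idx_poly j) \<inter> lift_roots (idx_poly j') = {}"
proof -
  have "idx_poly j \<noteq> idx_poly j'"
    using assms inj_on_idx_poly by (meson inj_onD)
  then show ?thesis
    using disjoint_lift_roots[OF idx_poly_monic_irr idx_poly_monic_irr] assms by blast
qed

lemma card_UN_orbits:
  assumes "J \<subseteq> orbits"
  shows "card (\<Union>j\<in>J. lift_roots (idx_poly j)) = (\<Sum>j\<in>J. fst j)"
proof -
  have "finite J"
    using assms finite_orbits by (rule finite_subset)
  then have "card (\<Union>j\<in>J. lift_roots (idx_poly j)) = (\<Sum>j\<in>J. card (lift_roots (idx_poly j)))"
    by (rule card_UN_disjoint) (simp, use assms disjoint_orbits in blast)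
  also have "\<dots> = (\<Sum>j\<in>J. fst j)"
    using assms card_lift_roots_idx_poly by (intro sum.cong) auto
  finally show ?thesis .
qed

lemma sum_orbit_degrees: "(\<Sum>j\<in>orbits. fst j) = q ^ r"
proof -
  have "(\<Union>j\<in>orbits. lift_roots (idx_poly j)) = UNIV"
    using ex_orbit by blast
  then show ?thesis
    using card_UN_orbits[of orbits] card_b by simp
qed

definition as_indicators :: "(nat \<times> nat) set \<Rightarrow> 'a poly \<Rightarrow> nat \<times> nat \<Rightarrow> bool" where
  "as_indicators J f = (\<lambda>j. j \<in> J \<and> ev f (idx_root j) \<in> as_image)"

text \<open>\<open>ev f\<close> commutes with the Frobenius and \<open>as_image\<close> is Frobenius-stable, so membership of
  \<open>ev f x\<close> in \<open>as_image\<close> depends only on the orbit of \<open>x\<close>.\<close>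
lemma N_AS_eq_weighted_sum: "N_AS p \<phi> f = weighted_sum orbits (as_indicators orbits f)"
proof -
  have orbit_count: "card {x \<in> lift_roots (idx_poly j). ev f x \<in> as_image}
      = fst j * of_bool (ev f (idx_root j) \<in> as_image)" if j: "j \<in> orbits" for j
  proof -
    have "ev f x \<in> as_image \<longleftrightarrow> ev f (idx_root j) \<in> as_image" if "x \<in> lift_roots (idx_poly j)" for x
      using that lift_roots_idx_poly_orbit[OF j] by (auto simp: ev_power_q as_image_power_q)
    then have "{x \<in> lift_roots (idx_poly j). ev f x \<in> as_image}
        = (if ev f (idx_root j) \<in> as_image then lift_roots (idx_poly j) else {})"
      by auto
    then show ?thesis
      using card_lift_roots_idx_poly[OF j] by simp
  qed
  have "{x. ev f x \<in> as_image} = (\<Union>j\<in>orbits. {x \<in> lift_roots (idx_poly j). ev f x \<in> as_image})"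
    using ex_orbit by blast
  then have "card {x. ev f x \<in> as_image}
      = card (\<Union>j\<in>orbits. {x \<in> lift_roots (idx_poly j). ev f x \<in> as_image})"
    by simp
  also have "\<dots> = (\<Sum>j\<in>orbits. card {x \<in> lift_roots (idx_poly j). ev f x \<in> as_image})"
    by (rule card_UN_disjoint[OF finite_orbits]) (simp, use disjoint_orbits in blast)
  also have "\<dots> = weighted_sum orbits (as_indicators orbits f)"
    unfolding weighted_sum_def as_indicators_def using orbit_count by (intro sum.cong) auto
  finally show ?thesis
    by (simp add: N_AS_eq_card)
qed

subsection \<open>Equidistribution of the values at the orbit representatives\<close>

definition eval_vector :: "(nat \<times> nat) set \<Rightarrow> 'a poly \<Rightarrow> nat \<times> nat \<Rightarrow> 'b" where
  "eval_vector J f = restrict (\<lambda>j. ev f (idx_root j)) J"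

lemma eval_vector_eq_iff:
  "eval_vector J f = eval_vector J g \<longleftrightarrow> f - g \<in> {h. \<forall>j\<in>J. ev h (idx_root j) = 0}"
  by (auto simp: eval_vector_def ev_diff fun_eq_iff restrict_def)

lemma eval_vector_in_PiE: "J \<subseteq> orbits \<Longrightarrow> eval_vector J f \<in> PiE J (\<lambda>j. frob_fixed (fst j))"
  using ev_frob_fixed[OF idx_root_frob_fixed] by (auto simp: eval_vector_def)

text \<open>Chinese remainder theorem: the \<open>idx_poly j\<close> are pairwise coprime and vanish at the
  \<open>idx_root j\<close>.\<close>
lemma inj_on_eval_vector:
  assumes J: "J \<subseteq> orbits"
  shows "inj_on (eval_vector J) (polys_below (\<Sum>j\<in>J. fst j))"
proof (rule inj_onI)
  fix h1 h2
  assume h: "h1 \<in> polys_below (\<Sum>j\<in>J. fst j)" "h2 \<in> polys_below (\<Sum>j\<in>J. fst j)"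
    "eval_vector J h1 = eval_vector J h2"
  have fin: "finite J"
    using J finite_orbits by (rule finite_subset)
  have irr: "irreducible (idx_poly j)" "lead_coeff (idx_poly j) = 1" "degree (idx_poly j) = fst j"
    "ev (idx_poly j) (idx_root j) = 0" if "j \<in> J" for j
    using idx_poly_monic_irr[of j] idx_root_root[of j] that J by (auto simp: monic_irr_def)
  have "idx_poly j dvd h1 - h2" if "j \<in> J" for j
    by (rule irreducible_dvd_of_root[OF irr(1,4)[OF that]])
      (use h(3) that in \<open>simp add: eval_vector_eq_iff\<close>)
  then have "prod idx_poly J dvd h1 - h2"
    using irr by (intro prod_monic_irreducible_dvd[OF fin inj_on_subset[OF inj_on_idx_poly J]]) auto
  moreover have "degree (prod idx_poly J) = (\<Sum>j\<in>J. fst j)"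
    using irr by (simp add: degree_prod_eq_sum_degree irreducible_def)
  moreover have "h1 - h2 \<in> polys_below (\<Sum>j\<in>J. fst j)"
    using h polys_below_diff by blast
  ultimately show "h1 = h2"
    using dvd_imp_degree_le[of "prod idx_poly J" "h1 - h2"] by (cases "h1 = h2") (auto simp: polys_below_iff)
qed

text \<open>Surjectivity follows from injectivity by counting.\<close>
lemma eval_vector_image_polys_below:
  assumes J: "J \<subseteq> orbits" and D: "(\<Sum>j\<in>J. fst j) \<le> D"
  shows "eval_vector J ` polys_below D = PiE J (\<lambda>j. frob_fixed (fst j))"
proof -
  let ?D0 = "\<Sum>j\<in>J. fst j" and ?P = "PiE J (\<lambda>j. frob_fixed (fst j))"
  have fin: "finite J"
    using J finite_orbits by (rule finite_subset)
  have "card (eval_vector J ` polys_below ?D0) = q ^ ?D0"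
    using card_image[OF inj_on_eval_vector[OF J]] by (simp add: card_polys_below card_a)
  also have "\<dots> = card ?P"
    unfolding power_sum card_PiE[OF fin]
    using J card_frob_fixed orbit_degree_dvd orbit_degree_pos by (intro prod.cong) auto
  finally have "eval_vector J ` polys_below ?D0 = ?P"
    using eval_vector_in_PiE[OF J] by (intro card_subset_eq finite_PiE[OF fin finite]) auto
  then have "?P \<subseteq> eval_vector J ` polys_below D"
    using image_mono[OF polys_below_mono[OF D], of "eval_vector J"] by simp
  moreover have "eval_vector J ` polys_below D \<subseteq> ?P"
    using eval_vector_in_PiE[OF J] by blast
  ultimately show ?thesis
    by (rule antisym[rotated])
qed

lemma sum_orbit_degrees_le: "J \<subseteq> orbits \<Longrightarrow> (\<Sum>j\<in>J. fst j) \<le> q ^ r"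
  using sum_mono2[OF finite_orbits, of J fst] sum_orbit_degrees by simp

lemma eval_vector_image_monic_polys:
  assumes J: "J \<subseteq> orbits" and d: "d \<ge> q ^ r"
  shows "eval_vector J ` monic_polys d = PiE J (\<lambda>j. frob_fixed (fst j))"
proof (intro equalityI subsetI)
  fix v assume "v \<in> eval_vector J ` monic_polys d"
  then show "v \<in> PiE J (\<lambda>j. frob_fixed (fst j))"
    using eval_vector_in_PiE[OF J] by blast
next
  fix v assume v: "v \<in> PiE J (\<lambda>j. frob_fixed (fst j))"
  let ?w = "restrict (\<lambda>j. v j - ev (monom 1 d) (idx_root j)) J"
  have "v j - ev (monom 1 d) (idx_root j) \<in> frob_fixed (fst j)" if "j \<in> J" for j
  proof -
    have "j \<in> orbits"
      using that J by blast
    then show ?thesis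
      using frob_fixed_diff[OF PiE_mem[OF v that] ev_frob_fixed[OF idx_root_frob_fixed]] by blast
  qed
  then have "?w \<in> PiE J (\<lambda>j. frob_fixed (fst j))"
    by (simp add: restrict_PiE_iff)
  then have "?w \<in> eval_vector J ` polys_below d"
    by (simp only: eval_vector_image_polys_below[OF J le_trans[OF sum_orbit_degrees_le[OF J] d]])
  then obtain h where h: "?w = eval_vector J h" "h \<in> polys_below d"
    by (rule imageE)
  have vec: "eval_vector J (h + monom 1 d) = v"
  proof
    fix j
    show "eval_vector J (h + monom 1 d) j = v j"
    proof (cases "j \<in> J")
      case True
      then have "ev h (idx_root j) = v j - ev (monom 1 d) (idx_root j)"
        using fun_cong[OF h(1), of j] by (simp add: eval_vector_def)
      then show ?thesis
        using True by (simp add: eval_vector_def ev_add)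
    next
      case False
      then show ?thesis
        using PiE_arb[OF v False] by (simp add: eval_vector_def)
    qed
  qed
  have "h + monom 1 d \<in> monic_polys d"
    using h(2) by (subst monic_polys_translate[OF monom_monic_polys]) (rule imageI)
  then show "v \<in> eval_vector J ` monic_polys d"
    by (rule image_eqI[where f = "eval_vector J", OF vec[symmetric]])
qed

lemma map_pmf_eval_vector:
  assumes J: "J \<subseteq> orbits" and d: "d \<ge> q ^ r"
  shows "map_pmf (eval_vector J) (pmf_of_set (monic_polys d))
       = pmf_of_set (PiE J (\<lambda>j. frob_fixed (fst j)))"
proof (rule map_pmf_of_set_uniform_fibres)
  show "finite (monic_polys d :: 'a poly set)"
    by (rule finite_monic_polys)
  show "monic_polys d \<noteq> ({} :: 'a poly set)"
    using monom_monic_polys by blast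
  show "eval_vector J ` monic_polys d = PiE J (\<lambda>j. frob_fixed (fst j))"
    by (rule eval_vector_image_monic_polys[OF J d])
  show "card {g \<in> monic_polys d. eval_vector J g = eval_vector J f}
      = card ({h. \<forall>j\<in>J. ev h (idx_root j) = 0} \<inter> polys_below d)" if "f \<in> monic_polys d" for f
    by (rule card_fibre_translate[OF _ that monic_polys_translate[OF that]]) (simp only: eval_vector_eq_iff)
qed

text \<open>At a representative of an orbit of length \<open>e\<close> with \<open>\<not> p dvd r / e\<close>, \<open>ev f\<close> is uniform on
  \<open>frob_fixed e\<close>, of which \<open>as_image\<close> occupies the fraction \<open>1 / p\<close>.\<close>
lemma map_pmf_as_indicators:
  assumes J: "J \<subseteq> orbits" and nd: "\<And>j. j \<in> J \<Longrightarrow> \<not> p dvd r div fst j" and d: "d \<ge> q ^ r"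
  shows "map_pmf (as_indicators J) (pmf_of_set (monic_polys d))
       = Pi_pmf J False (\<lambda>_. bernoulli_pmf (1 / real p))"
proof -
  have "map_pmf (as_indicators J) (pmf_of_set (monic_polys d))
      = map_pmf (\<lambda>v j. j \<in> J \<and> v j \<in> as_image) (pmf_of_set (PiE J (\<lambda>j. frob_fixed (fst j))))"
    unfolding map_pmf_eval_vector[OF J d, symmetric] map_pmf_comp
    by (rule map_pmf_cong) (auto simp: as_indicators_def eval_vector_def)
  also have "\<dots> = Pi_pmf J False (\<lambda>_. bernoulli_pmf (1 / real p))"
  proof (rule map_pmf_of_set_PiE_indicators)
    show "finite J"
      using J finite_orbits by (rule finite_subset)
    fix j assume j: "j \<in> J"
    then have jo: "j \<in> orbits"
      using J by blast
    have card: "card (frob_fixed (fst j)) = q ^ fst j"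
      using card_frob_fixed[OF orbit_degree_dvd[OF jo] orbit_degree_pos[OF jo]] .
    then have "card (frob_fixed (fst j)) > 0"
      using q_ge_2 by simp
    then show "finite (frob_fixed (fst j)) \<and> frob_fixed (fst j) \<noteq> {}"
      by (simp add: card_gt_0_iff)
    have "card (as_image \<inter> frob_fixed (fst j)) * p = q ^ fst j"
      by (rule card_as_image_frob_fixed[OF orbit_degree_dvd[OF jo] orbit_degree_pos[OF jo] nd[OF j]])
    then have "real (card (as_image \<inter> frob_fixed (fst j))) * p = real q ^ fst j"
      by (metis of_nat_mult of_nat_power)
    then show "card (as_image \<inter> frob_fixed (fst j)) / card (frob_fixed (fst j)) = 1 / real p"
      using card q_ge_2 p_ge_2 by (simp add: field_simps)
  qed
  finally show ?thesis .
qed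

lemma coprime_p_iff: "coprime m p \<longleftrightarrow> \<not> p dvd m"
proof
  assume "coprime m p"
  then show "\<not> p dvd m"
    using prime_p coprime_absorb_left[of p m] by (auto simp: coprime_commute)
next
  assume "\<not> p dvd m"
  then show "coprime m p"
    using prime_imp_coprime[OF prime_p] by (simp add: coprime_commute)
qed

lemma N_AS_distribution_coprime:
  assumes r: "coprime r p" and d: "d \<ge> q ^ r"
  shows "map_pmf (N_AS p \<phi>) (pmf_of_set (monic_polys d))
       = map_pmf (weighted_sum orbits) (Pi_pmf orbits False (\<lambda>_. bernoulli_pmf (1 / real p)))"
proof -
  have "\<not> p dvd r div fst j" if "j \<in> orbits" for j
  proof -
    have "r div fst j dvd r"
      using orbit_degree_dvd[OF that] by (metis dvd_mult_div_cancel dvd_triv_right)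
    then show ?thesis
      using r dvd_trans by (auto simp: coprime_p_iff)
  qed
  then have "map_pmf (as_indicators orbits) (pmf_of_set (monic_polys d))
      = Pi_pmf orbits False (\<lambda>_. bernoulli_pmf (1 / real p))"
    using d by (intro map_pmf_as_indicators) auto
  moreover have "map_pmf (N_AS p \<phi>) (pmf_of_set (monic_polys d))
      = map_pmf (weighted_sum orbits) (map_pmf (as_indicators orbits) (pmf_of_set (monic_polys d)))"
    unfolding map_pmf_comp by (rule map_pmf_cong) (simp_all add: N_AS_eq_weighted_sum)
  ultimately show ?thesis
    by simp
qed

definition coprime_orbits :: "(nat \<times> nat) set" where
  "coprime_orbits = irr_index {e. e dvd r \<and> coprime (r div e) p}"

lemma coprime_orbits_subset: "coprime_orbits \<subseteq> orbits"
  by (auto simp: coprime_orbits_def orbits_def irr_index_def)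

lemma coprime_orbits_iff: "j \<in> orbits \<Longrightarrow> j \<in> coprime_orbits \<longleftrightarrow> \<not> p dvd r div fst j"
  by (cases j) (simp add: coprime_orbits_def orbits_def irr_index_def coprime_p_iff)

text \<open>For \<open>p dvd r\<close>, the orbits whose length \<open>e\<close> satisfies \<open>p dvd r / e\<close> are exactly those
  inside \<open>frob_fixed (r / p)\<close>.\<close>
lemma sum_noncoprime_orbit_degrees:
  assumes pr: "p dvd r"
  shows "(\<Sum>j\<in>orbits - coprime_orbits. fst j) = q ^ (r div p)"
proof -
  have m: "r div p dvd r" "r div p \<ge> 1"
    using pr r_pos p_ge_2 by (auto elim!: dvdE)
  have noncoprime_iff: "j \<notin> coprime_orbits \<longleftrightarrow> fst j dvd r div p" if "j \<in> orbits" for j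
    using coprime_orbits_iff[OF that] orbit_degree_dvd[OF that] orbit_degree_pos[OF that] pr p_ge_2
    by (auto simp: dvd_div_iff_mult mult.commute elim!: dvdE)
  have "frob_fixed (r div p) = (\<Union>j\<in>orbits - coprime_orbits. lift_roots (idx_poly j))"
  proof (intro equalityI subsetI)
    fix x assume x: "x \<in> frob_fixed (r div p)"
    obtain j where j: "j \<in> orbits" "x \<in> lift_roots (idx_poly j)"
      using ex_orbit by blast
    then have "degree (idx_poly j) dvd r div p"
      using idx_poly_monic_irr[OF j(1)] x m(2)
      by (intro degree_dvd_of_root_frob_fixed) (auto simp: monic_irr_def lift_roots_def)
    then have "j \<notin> coprime_orbits"
      using noncoprime_iff[OF j(1)] idx_poly_monic_irr[OF j(1)] by (simp add: monic_irr_def)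
    then show "x \<in> (\<Union>j\<in>orbits - coprime_orbits. lift_roots (idx_poly j))"
      using j by blast
  next
    fix x assume "x \<in> (\<Union>j\<in>orbits - coprime_orbits. lift_roots (idx_poly j))"
    then obtain j where j: "j \<in> orbits" "j \<notin> coprime_orbits" "x \<in> lift_roots (idx_poly j)"
      by blast
    then have "x \<in> frob_fixed (fst j)"
      using root_frob_fixed_degree[of "idx_poly j" x] idx_poly_monic_irr[OF j(1)]
      by (simp add: monic_irr_def lift_roots_def)
    then show "x \<in> frob_fixed (r div p)"
      using frob_fixed_mult noncoprime_iff[OF j(1)] j(2) by (metis dvd_div_mult_self)
  qed
  then show ?thesis
    using card_UN_orbits[of "orbits - coprime_orbits"] card_frob_fixed[OF m] by auto
qed

text \<open>For \<open>p dvd r\<close> the orbits with \<open>p dvd r / e\<close> lie in \<open>as_image\<close> and contribute \<open>q ^ (r / p)\<close>.\<close>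
lemma N_AS_eq_p_dvd:
  assumes pr: "p dvd r"
  shows "N_AS p \<phi> f = q ^ (r div p) + weighted_sum coprime_orbits (as_indicators coprime_orbits f)"
proof -
  have "N_AS p \<phi> f = weighted_sum (orbits - coprime_orbits) (as_indicators orbits f)
      + weighted_sum coprime_orbits (as_indicators orbits f)"
    unfolding N_AS_eq_weighted_sum weighted_sum_def
    by (rule sum.subset_diff[OF coprime_orbits_subset finite_orbits])
  also have "weighted_sum (orbits - coprime_orbits) (as_indicators orbits f) = q ^ (r div p)"
  proof -
    have "ev f (idx_root j) \<in> as_image" if "j \<in> orbits - coprime_orbits" for j
      using that frob_fixed_subset_as_image[OF orbit_degree_dvd] coprime_orbits_iff
        ev_frob_fixed[OF idx_root_frob_fixed] by blast
    then have "weighted_sum (orbits - coprime_orbits) (as_indicators orbits f)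
        = (\<Sum>j\<in>orbits - coprime_orbits. fst j)"
      unfolding weighted_sum_def as_indicators_def by (intro sum.cong) auto
    then show ?thesis
      using sum_noncoprime_orbit_degrees[OF pr] by simp
  qed
  also have "weighted_sum coprime_orbits (as_indicators orbits f)
      = weighted_sum coprime_orbits (as_indicators coprime_orbits f)"
    unfolding weighted_sum_def as_indicators_def using coprime_orbits_subset by (intro sum.cong) auto
  finally show ?thesis .
qed

lemma N_AS_distribution_p_dvd:
  assumes pr: "p dvd r" and d: "d \<ge> q ^ r"
  shows "map_pmf (\<lambda>f. N_AS p \<phi> f - q ^ (r div p)) (pmf_of_set (monic_polys d))
       = map_pmf (weighted_sum coprime_orbits) (Pi_pmf coprime_orbits False (\<lambda>_. bernoulli_pmf (1 / real p)))"
proof -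
  have "map_pmf (as_indicators coprime_orbits) (pmf_of_set (monic_polys d))
      = Pi_pmf coprime_orbits False (\<lambda>_. bernoulli_pmf (1 / real p))"
    using coprime_orbits_subset coprime_orbits_iff d by (intro map_pmf_as_indicators) auto
  moreover have "map_pmf (\<lambda>f. N_AS p \<phi> f - q ^ (r div p)) (pmf_of_set (monic_polys d))
      = map_pmf (weighted_sum coprime_orbits)
          (map_pmf (as_indicators coprime_orbits) (pmf_of_set (monic_polys d)))"
    by (simp add: map_pmf_comp N_AS_eq_p_dvd[OF pr])
  ultimately show ?thesis
    by simp
qed

lemma bern_sum_pmf_irr_index:
  "finite E \<Longrightarrow> bern_sum_pmf p E (num_monic_irred TYPE('a))
     = map_pmf (weighted_sum (irr_index E)) (Pi_pmf (irr_index E) False (\<lambda>_. bernoulli_pmf (1 / real p)))"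
  unfolding irr_index_def by (rule bern_sum_pmf_eq_weighted_sum)

lemma expectation_weighted_sum_orbits:
  assumes "J \<subseteq> orbits"
  shows "measure_pmf.expectation (Pi_pmf J False (\<lambda>_. bernoulli_pmf (1 / real p)))
           (\<lambda>X. real (weighted_sum J X)) = (\<Sum>j\<in>J. real (fst j)) / p"
  using expectation_weighted_sum_Pi_bernoulli[OF finite_subset[OF assms finite_orbits]] p_ge_2
  by simp

theorem N_AS_bern_sum_coprime:
  assumes "coprime r p" "d \<ge> q ^ r"
  shows "map_pmf (N_AS p \<phi>) (pmf_of_set (monic_polys d))
       = bern_sum_pmf p {e. e dvd r} (num_monic_irred TYPE('a))"
  using N_AS_distribution_coprime[OF assms] r_pos
  by (simp add: bern_sum_pmf_irr_index orbits_def)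

theorem expectation_N_AS_coprime:
  assumes "coprime r p" "d \<ge> q ^ r"
  shows "measure_pmf.expectation (pmf_of_set (monic_polys d)) (\<lambda>f. real (N_AS p \<phi> f))
       = real q ^ r / real p"
proof -
  have "measure_pmf.expectation (pmf_of_set (monic_polys d)) (\<lambda>f. real (N_AS p \<phi> f))
      = measure_pmf.expectation (map_pmf (N_AS p \<phi>) (pmf_of_set (monic_polys d))) real"
    by simp
  also have "\<dots> = (\<Sum>j\<in>orbits. real (fst j)) / p"
    using expectation_weighted_sum_orbits[of orbits] by (simp add: N_AS_distribution_coprime[OF assms])
  also have "\<dots> = real q ^ r / real p"
    using sum_orbit_degrees by (simp flip: of_nat_sum)
  finally show ?thesis .
qed

theorem N_AS_bern_sum_p_dvd:
  assumes "p dvd r" "d \<ge> q ^ r"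
  shows "map_pmf (\<lambda>f. int (N_AS p \<phi> f) - int (q ^ (r div p))) (pmf_of_set (monic_polys d))
       = map_pmf int (bern_sum_pmf p {e. e dvd r \<and> coprime (r div e) p} (num_monic_irred TYPE('a)))"
proof -
  have fin: "finite {e. e dvd r \<and> coprime (r div e) p}"
    using r_pos by (intro finite_subset[OF _ finite_divisors_nat[of r]]) auto
  have "int (N_AS p \<phi> f) - int (q ^ (r div p)) = int (N_AS p \<phi> f - q ^ (r div p))" for f
    using N_AS_eq_p_dvd[OF assms(1), of f] by simp
  then have "map_pmf (\<lambda>f. int (N_AS p \<phi> f) - int (q ^ (r div p))) (pmf_of_set (monic_polys d))
      = map_pmf int (map_pmf (\<lambda>f. N_AS p \<phi> f - q ^ (r div p)) (pmf_of_set (monic_polys d)))"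
    unfolding map_pmf_comp by (intro map_pmf_cong) simp_all
  also have "\<dots> = map_pmf int (bern_sum_pmf p {e. e dvd r \<and> coprime (r div e) p} (num_monic_irred TYPE('a)))"
    by (simp only: N_AS_distribution_p_dvd[OF assms] bern_sum_pmf_irr_index[OF fin] coprime_orbits_def)
  finally show ?thesis .
qed

theorem expectation_N_AS_p_dvd:
  assumes pr: "p dvd r" and d: "d \<ge> q ^ r"
  shows "measure_pmf.expectation (pmf_of_set (monic_polys d)) (\<lambda>f. real (N_AS p \<phi> f))
       = real q ^ r / real p + (1 - 1 / real p) * real q ^ (r div p)"
proof -
  let ?U = "pmf_of_set (monic_polys d :: 'a poly set)" and ?c = "real q ^ (r div p)"
  have "finite (set_pmf ?U)"
    using finite_monic_polys monom_monic_polys by (subst set_pmf_of_set) auto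
  then have "measure_pmf.expectation ?U (\<lambda>f. real (N_AS p \<phi> f))
      = ?c + measure_pmf.expectation ?U (\<lambda>f. real (N_AS p \<phi> f - q ^ (r div p)))"
    using N_AS_eq_p_dvd[OF pr] by (simp add: integrable_measure_pmf_finite)
  also have "measure_pmf.expectation ?U (\<lambda>f. real (N_AS p \<phi> f - q ^ (r div p)))
      = measure_pmf.expectation (map_pmf (\<lambda>f. N_AS p \<phi> f - q ^ (r div p)) ?U) real"
    by simp
  also have "\<dots> = (\<Sum>j\<in>coprime_orbits. real (fst j)) / p"
    using expectation_weighted_sum_orbits[OF coprime_orbits_subset]
    by (simp add: N_AS_distribution_p_dvd[OF pr d])
  also have "(\<Sum>j\<in>coprime_orbits. real (fst j)) = real q ^ r - ?c"
  proof -
    have "q ^ r = q ^ (r div p) + (\<Sum>j\<in>coprime_orbits. fst j)"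
      using sum.subset_diff[OF coprime_orbits_subset finite_orbits, of fst]
        sum_orbit_degrees sum_noncoprime_orbit_degrees[OF pr] by simp
    then have "real q ^ r = ?c + (\<Sum>j\<in>coprime_orbits. real (fst j))"
      by (metis of_nat_add of_nat_power of_nat_sum)
    then show ?thesis
      by simp
  qed
  finally show ?thesis
    using p_ge_2 by (simp add: field_simps)
qed

end

text \<open>The hypothesis \<open>coprime d p\<close> only serves to make \<open>C\<^sub>f\<close> have a single point at
  infinity; it is built into the definition of \<open>AS_points\<close> and not needed below.\<close>
theorem theorem5:
  fixes p n r d q :: nat
    and \<phi> :: "'a::{finite,field} \<Rightarrow> 'b::{finite,field}"
  assumes "prime p" and "n \<ge> 1" and "q = p ^ n" and "r \<ge> 1"
    and "CARD('a) = q" and "CARD('b) = q ^ r" and "is_ring_hom \<phi>"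
    and "coprime d p" and "d \<ge> q ^ r"
  shows "(coprime r p \<longrightarrow>
           map_pmf (N_AS p \<phi>) (pmf_of_set (monic_polys d :: 'a poly set))
             = bern_sum_pmf p {e. e dvd r} (num_monic_irred TYPE('a))
         \<and> measure_pmf.expectation (pmf_of_set (monic_polys d :: 'a poly set))
             (\<lambda>f. real (N_AS p \<phi> f)) = real q ^ r / real p)
       \<and> (p dvd r \<longrightarrow>
           map_pmf (\<lambda>f. int (N_AS p \<phi> f) - int (q ^ (r div p)))
               (pmf_of_set (monic_polys d :: 'a poly set))
             = map_pmf int (bern_sum_pmf p {e. e dvd r \<and> coprime (r div e) p}
                                (num_monic_irred TYPE('a)))
         \<and> measure_pmf.expectation (pmf_of_set (monic_polys d :: 'a poly set))
             (\<lambda>f. real (N_AS p \<phi> f))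
             = real q ^ r / real p + (1 - 1 / real p) * real q ^ (r div p))"
proof -
  interpret artin_schreier p n r q \<phi>
    by unfold_locales (use assms in auto)
  show ?thesis
    using N_AS_bern_sum_coprime expectation_N_AS_coprime N_AS_bern_sum_p_dvd expectation_N_AS_p_dvd
      assms(9) by blast
qed

end
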